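(* Let $\dot W$ be a space-time white noise on $\mathbf{R}_+\times\mathbf{R}$, let $G(t,x,y)$ be the heat kernel of the Laplacian on $\mathbf{R}$, and set $g(t,x):=\int_0^t\int_{\mathbf{R}}G(t-s,x,y)W(\mathrm{d}y\,\mathrm{d}s)$. Then almost surely there exists a sequence $t_n\to\infty$ such that $$\inf_{h\in[0,1],\ x\in[0,1]}g(t_n+h,x)\to\infty\quad\text{as } n\to\infty.$$
   Context: $g$ is the mild solution of the stochastic heat equation $\partial_tu=\Delta u+\dot W$ on $\mathbf{R}$ with zero initial condition; the stochastic integral is the Walsh integral. *)

theory Defs
  imports "HOL-Probability.Probability"
begin

text \<open>Heat kernel of the Laplacian (equation u_t = u_xx) on the real line.\<close>
definition heat_kernel :: "real \<Rightarrow> real \<Rightarrow> real \<Rightarrow> real" where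
  "heat_kernel t x y = exp (- ((x - y)\<^sup>2) / (4 * t)) / sqrt (4 * pi * t)"

text \<open>Square-integrable deterministic integrands on R_+ x R (points are pairs (s,y): time s, space y).\<close>
definition wn_integrand :: "(real \<times> real \<Rightarrow> real) \<Rightarrow> bool" where
  "wn_integrand f \<longleftrightarrow> f \<in> borel_measurable lborel \<and>
     integrable lborel (\<lambda>z. (f z)\<^sup>2) \<and> (\<forall>s y. s < 0 \<longrightarrow> f (s, y) = 0)"

text \<open>W f is the stochastic (Walsh = Wiener, for deterministic integrands) integral of f
  against a space-time white noise on R_+ x R defined on the probability space M:
  an isonormal Gaussian process on L^2(R_+ x R).\<close>
definition white_noise_integral ::
    "'a measure \<Rightarrow> ((real \<times> real \<Rightarrow> real) \<Rightarrow> 'a \<Rightarrow> real) \<Rightarrow> bool" where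
  "white_noise_integral M W \<longleftrightarrow> prob_space M \<and>
     (\<forall>f. wn_integrand f \<longrightarrow>
        W f \<in> borel_measurable M \<and>
        ((\<integral>z. (f z)\<^sup>2 \<partial>lborel) > 0 \<longrightarrow>
            distributed M lborel (W f)
              (\<lambda>v. ennreal (normal_density 0 (sqrt (\<integral>z. (f z)\<^sup>2 \<partial>lborel)) v))) \<and>
        ((\<integral>z. (f z)\<^sup>2 \<partial>lborel) = 0 \<longrightarrow> (AE \<omega> in M. W f \<omega> = 0))) \<and>
     (\<forall>f g (a::real) (b::real). wn_integrand f \<longrightarrow> wn_integrand g \<longrightarrow>
        (AE \<omega> in M. W (\<lambda>z. a * f z + b * g z) \<omega> = a * W f \<omega> + b * W g \<omega>))"

definition heat_integrand :: "real \<Rightarrow> real \<Rightarrow> real \<times> real \<Rightarrow> real" where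
  "heat_integrand t x = (\<lambda>(s, y). if 0 \<le> s \<and> s < t then heat_kernel (t - s) x y else 0)"

end

theory Submission
  imports Defs "HOL-Real_Asymp.Real_Asymp"
begin

text \<open>
  Write F(t,x) for the integrand of g(t,x), so that g(t,x) is a centred Gaussian variable and the
  covariance of g(t,x) and g(s,y) is the L^2 inner product of F(t,x) and F(s,y), which the
  Chapman-Kolmogorov identity turns into a one-dimensional integral of the heat kernel.
  In particular Var g(T,0) = sqrt T / sqrt (2 pi), and along the sparse times T_n = 16^(n+1) the
  normalised variables Z_n = g(T_n,0) / sd(T_n) are almost uncorrelated.  A second-moment bound for
  a sum of the centred variables exp(2 Z_n - 2) - 1 over widely separated indices shows that almost
  surely Z_n > 1/2 infinitely often, so g(T_n,0) exceeds a constant multiple of 2^n infinitely often.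

  On the other hand the increments of g have variance at most sqrt |t - s| + 2 sqrt |x - y| t^(1/4).
  A chaining argument along the 16-adic grids of [T_n, T_n + 1] x [0,1], Gaussian tail bounds and
  Borel-Cantelli show that eventually the grid values of g stay within O(sqrt (n 2^n)) of g(T_n,0);
  continuity extends this to the whole square, which gives the theorem along those n where
  Z_n > 1/2.
\<close>

section \<open>Heat kernel\<close>

lemma heat_kernel_eq_normal_density:
  "t > 0 \<Longrightarrow> heat_kernel t x y = normal_density 0 (sqrt (2 * t)) (x - y)"
proof -
  assume t: "t > 0"
  have "(sqrt (2 * t))\<^sup>2 = 2 * t" using t by simp
  then show ?thesis unfolding normal_density_def heat_kernel_def
    by (simp add: algebra_simps)
qed

lemma heat_kernel_nonneg: "t \<ge> 0 \<Longrightarrow> heat_kernel t x y \<ge> 0"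
  by (simp add: heat_kernel_def)

lemma measurable_heat_kernel[measurable]:
  assumes [measurable]: "f \<in> borel_measurable M" "g \<in> borel_measurable M" "h \<in> borel_measurable M"
  shows "(\<lambda>w. heat_kernel (f w) (g w) (h w)) \<in> borel_measurable M"
  unfolding heat_kernel_def by measurable

lemma sqrt_eight: "sqrt 8 = 2 * sqrt 2"
  using real_sqrt_mult[of 4 2] by simp

lemma heat_kernel_diag: "t > 0 \<Longrightarrow> heat_kernel t x x = (1 / sqrt (4 * pi)) * t powr (-1/2)"
  by (simp add: heat_kernel_def powr_minus_divide powr_half_sqrt real_sqrt_mult)

lemma heat_kernel_chapman_kolmogorov:
  assumes "s > 0" and "t > 0"
  shows "(\<integral>\<^sup>+z. ennreal (heat_kernel s x z * heat_kernel t y z) \<partial>lborel) = ennreal (heat_kernel (s + t) x y)"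
proof -
  have "(\<integral>\<^sup>+z. ennreal (heat_kernel s x z * heat_kernel t y z) \<partial>lborel)
     = (\<integral>\<^sup>+z. ennreal (normal_density 0 (sqrt (2 * s)) (x - z) * normal_density 0 (sqrt (2 * t)) (z - y)) \<partial>lborel)"
    using assms by (simp add: heat_kernel_eq_normal_density normal_density_def power2_commute del: ennreal_mult')
  also have "\<dots> = (\<integral>\<^sup>+w. ennreal (normal_density 0 (sqrt (2 * s)) ((x - y) - w) * normal_density 0 (sqrt (2 * t)) w) \<partial>lborel)"
    by (subst nn_integral_real_affine[where c=1 and t=y]) (simp_all add: algebra_simps)
  also have "\<dots> = normal_density 0 (sqrt ((sqrt (2 * s))\<^sup>2 + (sqrt (2 * t))\<^sup>2)) (x - y)"
    using fun_cong[OF conv_normal_density_zero_mean[of "sqrt (2 * s)" "sqrt (2 * t)"], of "x - y"] assms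
    by simp
  also have "\<dots> = heat_kernel (s + t) x y"
    using assms by (simp add: heat_kernel_eq_normal_density algebra_simps)
  finally show ?thesis .
qed

lemma one_minus_exp_neg_le_powr: "(v::real) \<ge> 0 \<Longrightarrow> 1 - exp (- v) \<le> v powr (1/4)"
proof (cases "v \<le> 1")
  case True
  assume v: "v \<ge> 0"
  have "1 - exp (-v) \<le> v" using exp_ge_add_one_self[of "-v"] by simp
  also have "v \<le> v powr (1/4)"
  proof (cases "v = 0")
    case False
    then have "v powr 1 \<le> v powr (1/4)" using True v by (intro powr_mono') auto
    then show ?thesis using v False by simp
  qed simp
  finally show ?thesis .
next
  case False
  then have "1 \<le> v powr (1/4)" by (simp add: ge_one_powr_ge_zero)
  then show ?thesis by (smt (verit) exp_gt_zero)
qed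

lemma heat_kernel_diag_le:
  assumes u: "u > 0"
  shows "heat_kernel (2 * u) x x \<le> heat_kernel (2 * u) x y + ((x - y)\<^sup>2 / 8) powr (1/4) / sqrt (8 * pi) * u powr (-3/4)"
proof -
  define v where "v = (x - y)\<^sup>2 / (8 * u)"
  have v0: "v \<ge> 0" using u by (simp add: v_def)
  have diag: "heat_kernel (2 * u) x x = u powr (-1/2) / sqrt (8 * pi)"
    using u by (simp add: heat_kernel_diag powr_mult real_sqrt_mult powr_minus_divide powr_half_sqrt sqrt_eight)
  have off: "heat_kernel (2 * u) x y = exp (- v) * (u powr (-1/2) / sqrt (8 * pi))"
    using u by (simp add: heat_kernel_def v_def powr_minus_divide powr_half_sqrt real_sqrt_mult sqrt_eight field_simps)
  have v_powr: "v powr (1/4) = ((x - y)\<^sup>2 / 8) powr (1/4) * u powr (-1/4)"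
    using u by (simp add: v_def powr_divide powr_mult powr_minus_divide field_simps)
  have u_powr: "u powr (-1/4) * u powr (-1/2) = u powr (-3/4)"
    using u by (simp add: powr_add[symmetric])
  have "heat_kernel (2 * u) x x - heat_kernel (2 * u) x y = (1 - exp (-v)) * (u powr (-1/2) / sqrt (8 * pi))"
    unfolding diag off by (simp add: left_diff_distrib diff_divide_distrib)
  also have "\<dots> \<le> v powr (1/4) * (u powr (-1/2) / sqrt (8 * pi))"
    using one_minus_exp_neg_le_powr[OF v0] by (intro mult_right_mono) auto
  also have "\<dots> = ((x - y)\<^sup>2 / 8) powr (1/4) / sqrt (8 * pi) * u powr (-3/4)"
    unfolding v_powr u_powr[symmetric] by simp
  finally show ?thesis by simp
qed

section \<open>Covariances of the heat integrands\<close>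

lemma measurable_heat_integrand[measurable]: "heat_integrand t x \<in> borel_measurable borel"
proof -
  have "heat_integrand t x \<in> borel_measurable (borel \<Otimes>\<^sub>M borel)"
    unfolding heat_integrand_def by measurable
  then show ?thesis by (simp add: borel_prod)
qed

lemma heat_integrand_nonneg: "heat_integrand t x w \<ge> 0"
  by (cases w) (auto simp: heat_integrand_def intro!: heat_kernel_nonneg)

definition heat_covariance :: "real \<Rightarrow> real \<Rightarrow> real \<Rightarrow> real \<Rightarrow> ennreal" where
  "heat_covariance t s x y =
     (\<integral>\<^sup>+r. ennreal (indicator {0..<min t s} r * heat_kernel (t + s - 2 * r) x y) \<partial>lborel)"

lemma nn_integral_heat_integrand_mult:
  assumes t: "t \<ge> 0" and s: "s \<ge> 0"
  shows "(\<integral>\<^sup>+w. ennreal (heat_integrand t x w * heat_integrand s y w) \<partial>lborel) = heat_covariance t s x y"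
proof -
  have "(\<integral>\<^sup>+w. ennreal (heat_integrand t x w * heat_integrand s y w) \<partial>lborel)
      = (\<integral>\<^sup>+w. ennreal (heat_integrand t x w * heat_integrand s y w) \<partial>(lborel \<Otimes>\<^sub>M lborel))"
    by (simp add: lborel_prod)
  also have "\<dots> = (\<integral>\<^sup>+r. \<integral>\<^sup>+z. ennreal (heat_integrand t x (r, z) * heat_integrand s y (r, z)) \<partial>lborel \<partial>lborel)"
    by (subst lborel.nn_integral_fst[symmetric]) (auto simp: lborel_prod)
  also have "\<dots> = heat_covariance t s x y"
    unfolding heat_covariance_def
  proof (rule nn_integral_cong)
    fix r :: real
    show "(\<integral>\<^sup>+z. ennreal (heat_integrand t x (r, z) * heat_integrand s y (r, z)) \<partial>lborel)
         = ennreal (indicator {0..<min t s} r * heat_kernel (t + s - 2 * r) x y)"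
    proof (cases "0 \<le> r \<and> r < min t s")
      case True
      then have "(\<integral>\<^sup>+z. ennreal (heat_integrand t x (r, z) * heat_integrand s y (r, z)) \<partial>lborel)
         = (\<integral>\<^sup>+z. ennreal (heat_kernel (t - r) x z * heat_kernel (s - r) y z) \<partial>lborel)"
        by (simp add: heat_integrand_def)
      also have "\<dots> = ennreal (heat_kernel ((t - r) + (s - r)) x y)"
        using True by (intro heat_kernel_chapman_kolmogorov) auto
      finally show ?thesis using True by (simp add: algebra_simps)
    next
      case False
      then show ?thesis by (auto simp: heat_integrand_def)
    qed
  qed
  finally show ?thesis .
qed

lemma nn_integral_powr_Ioc_0:
  assumes a: "a > -1" and c: "c \<ge> 0"
  shows "(\<integral>\<^sup>+u. ennreal (indicator {0<..c} u * u powr a) \<partial>lborel) = ennreal (c powr (a + 1) / (a + 1))"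
proof -
  have "(\<integral>\<^sup>+u. ennreal (indicator {0<..c} u * u powr a) \<partial>lborel)
      = (\<integral>\<^sup>+u. ennreal (u powr a) * indicator {0..c} u \<partial>lborel)"
    by (rule nn_integral_cong) (auto simp: indicator_def)
  also have "\<dots> = ennreal (c powr (a + 1) / (a + 1))"
    by (rule nn_integral_has_integral_lebesgue'[OF _ has_integral_powr_from_0[OF a c]]) simp
  finally show ?thesis .
qed

lemma nn_integral_powr_Ioc:
  assumes a: "a > -1" and h: "0 \<le> h" "h \<le> b"
  shows "(\<integral>\<^sup>+u. ennreal (indicator {h<..b} u * u powr a) \<partial>lborel)
       = ennreal (b powr (a + 1) / (a + 1) - h powr (a + 1) / (a + 1))"
proof -
  have "(\<integral>\<^sup>+u. ennreal (indicator {0<..b} u * u powr a) \<partial>lborel)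
     = (\<integral>\<^sup>+u. ennreal (indicator {0<..h} u * u powr a) + ennreal (indicator {h<..b} u * u powr a) \<partial>lborel)"
    using h by (intro nn_integral_cong) (auto simp: indicator_def)
  also have "\<dots> = (\<integral>\<^sup>+u. ennreal (indicator {0<..h} u * u powr a) \<partial>lborel)
       + (\<integral>\<^sup>+u. ennreal (indicator {h<..b} u * u powr a) \<partial>lborel)"
    by (rule nn_integral_add) auto
  finally have split: "ennreal (b powr (a + 1) / (a + 1)) = ennreal (h powr (a + 1) / (a + 1))
       + (\<integral>\<^sup>+u. ennreal (indicator {h<..b} u * u powr a) \<partial>lborel)"
    using nn_integral_powr_Ioc_0[OF a] h by simp
  have "(\<integral>\<^sup>+u. ennreal (indicator {h<..b} u * u powr a) \<partial>lborel)
      = ennreal (b powr (a + 1) / (a + 1)) - ennreal (h powr (a + 1) / (a + 1))"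
    unfolding split by simp
  also have "\<dots> = ennreal (b powr (a + 1) / (a + 1) - h powr (a + 1) / (a + 1))"
    using a by (intro ennreal_minus) auto
  finally show ?thesis .
qed

lemma nn_integral_reflect_Ico:
  fixes \<phi> :: "real \<Rightarrow> real"
  assumes [measurable]: "\<phi> \<in> borel_measurable borel"
  shows "(\<integral>\<^sup>+s. ennreal (indicator {0..<t} s * \<phi> (t - s)) \<partial>lborel)
       = (\<integral>\<^sup>+u. ennreal (indicator {0<..t} u * \<phi> u) \<partial>lborel)"
proof -
  have "(\<integral>\<^sup>+u. ennreal (indicator {0<..t} u * \<phi> u) \<partial>lborel)
     = ennreal \<bar>-1::real\<bar> * (\<integral>\<^sup>+s. ennreal (indicator {0<..t} (t + (-1) * s) * \<phi> (t + (-1) * s)) \<partial>lborel)"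
    by (rule nn_integral_real_affine) auto
  also have "\<dots> = (\<integral>\<^sup>+s. ennreal (indicator {0..<t} s * \<phi> (t - s)) \<partial>lborel)"
    by (auto intro!: nn_integral_cong simp: indicator_def)
  finally show ?thesis ..
qed

lemma heat_covariance_diag:
  assumes t: "t \<ge> 0"
  shows "heat_covariance t t x x = ennreal (sqrt t / sqrt (2 * pi))"
proof -
  have "heat_covariance t t x x
      = (\<integral>\<^sup>+s. ennreal (indicator {0..<t} s * (\<lambda>u. heat_kernel (2 * u) x x) (t - s)) \<partial>lborel)"
    by (simp add: heat_covariance_def algebra_simps)
  also have "\<dots> = (\<integral>\<^sup>+u. ennreal (indicator {0<..t} u * heat_kernel (2 * u) x x) \<partial>lborel)"
    by (rule nn_integral_reflect_Ico) measurable
  also have "\<dots> = (\<integral>\<^sup>+u. ennreal (1 / sqrt (8 * pi)) * ennreal (indicator {0<..t} u * u powr (-1/2)) \<partial>lborel)"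
  proof (rule nn_integral_cong)
    fix u :: real
    show "ennreal (indicator {0<..t} u * heat_kernel (2 * u) x x) =
         ennreal (1 / sqrt (8 * pi)) * ennreal (indicator {0<..t} u * u powr (-1/2))"
    proof (cases "u \<in> {0<..t}")
      case True
      then have "heat_kernel (2 * u) x x = (1 / sqrt (8 * pi)) * u powr (-1/2)"
        by (simp add: heat_kernel_diag powr_mult real_sqrt_mult powr_minus_divide powr_half_sqrt sqrt_eight)
      then show ?thesis using True by (simp add: ennreal_mult'[symmetric])
    qed simp
  qed
  also have "\<dots> = ennreal (1 / sqrt (8 * pi)) * ennreal (t powr (-1/2 + 1) / (-1/2 + 1))"
    by (subst nn_integral_cmult) (auto simp: nn_integral_powr_Ioc_0 t)
  also have "\<dots> = ennreal (sqrt t / sqrt (2 * pi))"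
  proof -
    have "sqrt (8 * pi) = 2 * sqrt (2 * pi)"
      by (simp add: real_sqrt_mult sqrt_eight)
    then have "(1 / sqrt (8 * pi)) * (t powr (-1/2 + 1) / (-1/2 + 1)) = sqrt t / sqrt (2 * pi)"
      using t by (simp add: powr_half_sqrt field_simps)
    then show ?thesis by (simp add: ennreal_mult'[symmetric])
  qed
  finally show ?thesis .
qed

lemma heat_covariance_time:
  assumes s: "0 \<le> s" "s < t"
  shows "heat_covariance t s x x = ennreal ((sqrt (t + s) - sqrt (t - s)) / (2 * sqrt pi))"
proof -
  define f where "f u = ennreal (indicator {t - s<..t + s} u * heat_kernel u x x)" for u
  have [measurable]: "f \<in> borel_measurable borel" unfolding f_def by measurable
  have "heat_covariance t s x x = (\<integral>\<^sup>+r. f (t + s - 2 * r) \<partial>lborel)"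
    using s unfolding heat_covariance_def by (intro nn_integral_cong) (auto simp: f_def indicator_def)
  also have "\<dots> = ennreal \<bar>-1/2::real\<bar> * (\<integral>\<^sup>+u. f (t + s - 2 * ((t + s) / 2 + (-1/2) * u)) \<partial>lborel)"
    by (rule nn_integral_real_affine) auto
  also have "\<dots> = ennreal (1/2) * (\<integral>\<^sup>+u. f u \<partial>lborel)"
  proof -
    have "\<And>u. t + s - 2 * ((t + s) / 2 + (-1/2) * u) = u" by (simp add: field_simps)
    then have "(\<lambda>u. f (t + s - 2 * ((t + s) / 2 + (-1/2) * u))) = f" by (simp only:)
    then show ?thesis by simp
  qed
  also have "(\<integral>\<^sup>+u. f u \<partial>lborel)
      = (\<integral>\<^sup>+u. ennreal (1 / sqrt (4 * pi)) * ennreal (indicator {t - s<..t + s} u * u powr (-1/2)) \<partial>lborel)"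
  proof (rule nn_integral_cong)
    fix u :: real
    show "f u = ennreal (1 / sqrt (4 * pi)) * ennreal (indicator {t - s<..t + s} u * u powr (-1/2))"
    proof (cases "u \<in> {t - s<..t + s}")
      case True
      then have "u > 0" using s by auto
      then show ?thesis using True by (simp add: f_def heat_kernel_diag ennreal_mult'[symmetric])
    qed (simp add: f_def)
  qed
  also have "\<dots> = ennreal (1 / sqrt (4 * pi)) * ennreal ((t + s) powr (-1/2 + 1) / (-1/2 + 1) - (t - s) powr (-1/2 + 1) / (-1/2 + 1))"
    using s by (subst nn_integral_cmult) (auto simp: nn_integral_powr_Ioc)
  also have "ennreal (1/2) * \<dots> = ennreal ((sqrt (t + s) - sqrt (t - s)) / (2 * sqrt pi))"
  proof -
    define X where "X = (t + s) powr (-1/2 + 1) / (-1/2 + 1) - (t - s) powr (-1/2 + 1) / (-1/2 + 1)"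
    have X0: "X \<ge> 0" unfolding X_def using s by (auto intro!: divide_right_mono powr_mono2)
    have X_value: "(1/2) * ((1 / sqrt (4 * pi)) * X) = (sqrt (t + s) - sqrt (t - s)) / (2 * sqrt pi)"
      using s by (simp add: X_def powr_half_sqrt real_sqrt_mult field_simps)
    have "ennreal ((1/2) * ((1 / sqrt (4 * pi)) * X)) = ennreal (1/2) * ennreal ((1 / sqrt (4 * pi)) * X)"
      by (rule ennreal_mult) (simp_all add: X0)
    also have "ennreal ((1 / sqrt (4 * pi)) * X) = ennreal (1 / sqrt (4 * pi)) * ennreal X"
      by (rule ennreal_mult) (simp_all add: X0)
    finally show ?thesis unfolding X_def[symmetric] X_value by simp
  qed
  finally show ?thesis .
qed

lemma heat_covariance_diag_le:
  assumes t: "t \<ge> 0"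
  shows "heat_covariance t t x x
     \<le> heat_covariance t t x y + ennreal (4 * ((x - y)\<^sup>2 / 8) powr (1/4) * t powr (1/4) / sqrt (8 * pi))"
proof -
  define C where "C = ((x - y)\<^sup>2 / 8) powr (1/4) / sqrt (8 * pi)"
  have C0: "C \<ge> 0" by (simp add: C_def)
  have "(\<integral>\<^sup>+s. ennreal (indicator {0..<t} s * (C * (t - s) powr (-3/4))) \<partial>lborel)
      = (\<integral>\<^sup>+u. ennreal (indicator {0<..t} u * (C * u powr (-3/4))) \<partial>lborel)"
    by (rule nn_integral_reflect_Ico[where \<phi>="\<lambda>u. C * u powr (-3/4)"]) measurable
  also have "\<dots> = (\<integral>\<^sup>+u. ennreal C * ennreal (indicator {0<..t} u * u powr (-3/4)) \<partial>lborel)"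
    using C0 by (intro nn_integral_cong) (simp add: ennreal_mult'[symmetric] mult.left_commute)
  also have "\<dots> = ennreal C * ennreal (t powr (-3/4 + 1) / (-3/4 + 1))"
    using t by (subst nn_integral_cmult) (auto simp: nn_integral_powr_Ioc_0)
  also have "\<dots> = ennreal (4 * ((x - y)\<^sup>2 / 8) powr (1/4) * t powr (1/4) / sqrt (8 * pi))"
    using C0 by (simp add: ennreal_mult'[symmetric] C_def)
  finally have error_term: "(\<integral>\<^sup>+s. ennreal (indicator {0..<t} s * (C * (t - s) powr (-3/4))) \<partial>lborel)
      = ennreal (4 * ((x - y)\<^sup>2 / 8) powr (1/4) * t powr (1/4) / sqrt (8 * pi))" .
  have "heat_covariance t t x x
     \<le> (\<integral>\<^sup>+s. ennreal (indicator {0..<t} s * heat_kernel (t + t - 2 * s) x y)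
            + ennreal (indicator {0..<t} s * (C * (t - s) powr (-3/4))) \<partial>lborel)"
    unfolding heat_covariance_def min.idem
  proof (rule nn_integral_mono)
    fix s :: real
    show "ennreal (indicator {0..<t} s * heat_kernel (t + t - 2 * s) x x)
       \<le> ennreal (indicator {0..<t} s * heat_kernel (t + t - 2 * s) x y)
            + ennreal (indicator {0..<t} s * (C * (t - s) powr (-3/4)))"
    proof (cases "s \<in> {0..<t}")
      case True
      then have u: "t - s > 0" by auto
      have "heat_kernel (2 * (t - s)) x x \<le> heat_kernel (2 * (t - s)) x y + C * (t - s) powr (-3/4)"
        using heat_kernel_diag_le[OF u, of x y] by (simp add: C_def)
      moreover have "heat_kernel (2 * (t - s)) x y \<ge> 0" using u by (intro heat_kernel_nonneg) auto
      moreover have "C * (t - s) powr (-3/4) \<ge> 0" using C0 by simp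
      ultimately show ?thesis using True by (simp add: ennreal_plus[symmetric] algebra_simps del: ennreal_plus)
    qed simp
  qed
  also have "\<dots> = heat_covariance t t x y
      + (\<integral>\<^sup>+s. ennreal (indicator {0..<t} s * (C * (t - s) powr (-3/4))) \<partial>lborel)"
    unfolding heat_covariance_def min.idem by (rule nn_integral_add) auto
  finally show ?thesis unfolding error_term .
qed

lemma heat_covariance_far_le:
  assumes ab: "0 \<le> a" "a < b"
  shows "heat_covariance a b 0 0 \<le> ennreal (a / sqrt (4 * pi * (b - a)))"
proof -
  have min: "min a b = a" using ab by simp
  have "heat_covariance a b 0 0 \<le> (\<integral>\<^sup>+r. ennreal (1 / sqrt (4 * pi * (b - a))) * indicator {0..<a} r \<partial>lborel)"
    unfolding heat_covariance_def min
  proof (rule nn_integral_mono)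
    fix r :: real
    show "ennreal (indicator {0..<a} r * heat_kernel (a + b - 2 * r) 0 0)
        \<le> ennreal (1 / sqrt (4 * pi * (b - a))) * indicator {0..<a} r"
    proof (cases "r \<in> {0..<a}")
      case True
      have "heat_kernel (a + b - 2 * r) 0 0 = 1 / sqrt (4 * pi * (a + b - 2 * r))"
        by (simp add: heat_kernel_def)
      also have "\<dots> \<le> 1 / sqrt (4 * pi * (b - a))"
        using True ab by (intro divide_left_mono) (auto intro!: mult_pos_pos)
      finally show ?thesis using True by (simp add: ennreal_leI)
    qed simp
  qed
  also have "\<dots> = ennreal (1 / sqrt (4 * pi * (b - a))) * emeasure lborel {0..<a}"
    by (rule nn_integral_cmult_indicator) simp
  also have "\<dots> = ennreal (a / sqrt (4 * pi * (b - a)))"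
    using ab by (simp add: ennreal_mult'[symmetric])
  finally show ?thesis .
qed

lemma integrable_heat_integrand_square:
  assumes t: "t \<ge> 0"
  shows "integrable lborel (\<lambda>w. (heat_integrand t x w)\<^sup>2)"
  using nn_integral_heat_integrand_mult[OF t t, of x x] heat_covariance_diag[OF t, of x]
  by (intro integrableI_nonneg) (auto simp: power2_eq_square)

lemma integral_heat_integrand_square:
  assumes t: "t \<ge> 0"
  shows "(\<integral>w. (heat_integrand t x w)\<^sup>2 \<partial>lborel) = sqrt t / sqrt (2 * pi)"
  using nn_integral_heat_integrand_mult[OF t t, of x x] heat_covariance_diag[OF t, of x] t
  by (subst integral_eq_nn_integral) (auto simp: power2_eq_square)

lemma wn_integrand_heat_integrand:
  assumes "t \<ge> 0"
  shows "wn_integrand (heat_integrand t x)"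
proof -
  have "\<forall>s y. s < 0 \<longrightarrow> heat_integrand t x (s, y) = 0" by (simp add: heat_integrand_def)
  moreover have "heat_integrand t x \<in> borel_measurable lborel" by simp
  ultimately show ?thesis
    unfolding wn_integrand_def using integrable_heat_integrand_square[OF assms] by blast
qed

lemma integrable_heat_integrand_mult:
  assumes t: "t \<ge> 0" and s: "s \<ge> 0"
  shows "integrable lborel (\<lambda>w. heat_integrand t x w * heat_integrand s y w)"
proof (rule Bochner_Integration.integrable_bound)
  show "integrable lborel (\<lambda>w. (heat_integrand t x w)\<^sup>2 + (heat_integrand s y w)\<^sup>2)"
    using integrable_heat_integrand_square[OF t] integrable_heat_integrand_square[OF s]
    by (rule Bochner_Integration.integrable_add)
  show "AE w in lborel. norm (heat_integrand t x w * heat_integrand s y w)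
      \<le> norm ((heat_integrand t x w)\<^sup>2 + (heat_integrand s y w)\<^sup>2)"
  proof (rule AE_I2)
    fix w
    have "2 * (heat_integrand t x w * heat_integrand s y w) \<le> (heat_integrand t x w)\<^sup>2 + (heat_integrand s y w)\<^sup>2"
      using sum_squares_bound[of "heat_integrand t x w" "heat_integrand s y w"] by simp
    moreover have "heat_integrand t x w * heat_integrand s y w \<ge> 0"
      by (simp add: heat_integrand_nonneg)
    ultimately show "norm (heat_integrand t x w * heat_integrand s y w)
      \<le> norm ((heat_integrand t x w)\<^sup>2 + (heat_integrand s y w)\<^sup>2)"
      by simp
  qed
qed simp

lemma integral_heat_integrand_mult:
  assumes "t \<ge> 0" and "s \<ge> 0"
  shows "(\<integral>w. heat_integrand t x w * heat_integrand s y w \<partial>lborel) = enn2real (heat_covariance t s x y)"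
  by (subst integral_eq_nn_integral) (auto simp: nn_integral_heat_integrand_mult[OF assms] heat_integrand_nonneg)

lemma integral_heat_integrand_mult_time:
  assumes "0 \<le> s" "s < t"
  shows "(\<integral>w. heat_integrand t x w * heat_integrand s x w \<partial>lborel) = (sqrt (t + s) - sqrt (t - s)) / (2 * sqrt pi)"
proof -
  have "sqrt (t - s) \<le> sqrt (t + s)" using assms by simp
  then show ?thesis
    using assms by (simp add: integral_heat_integrand_mult heat_covariance_time)
qed

lemma integral_heat_integrand_mult_space_ge:
  assumes t: "t \<ge> 0"
  shows "(\<integral>w. heat_integrand t x w * heat_integrand t y w \<partial>lborel)
     \<ge> sqrt t / sqrt (2 * pi) - 4 * ((x - y)\<^sup>2 / 8) powr (1/4) * t powr (1/4) / sqrt (8 * pi)"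
proof -
  have "heat_covariance t t x y \<le> heat_covariance t t x x"
    unfolding heat_covariance_def min.idem
    by (intro nn_integral_mono ennreal_leI) (auto simp: indicator_def heat_kernel_def divide_right_mono)
  then obtain a where a: "heat_covariance t t x y = ennreal a" "a \<ge> 0"
    unfolding heat_covariance_diag[OF t] by (cases "heat_covariance t t x y") (auto simp: top_unique)
  have "ennreal (sqrt t / sqrt (2 * pi)) \<le> ennreal a + ennreal (4 * ((x - y)\<^sup>2 / 8) powr (1/4) * t powr (1/4) / sqrt (8 * pi))"
    using heat_covariance_diag_le[OF t, of x y] heat_covariance_diag[OF t, of x] a by simp
  then have "sqrt t / sqrt (2 * pi) \<le> a + 4 * ((x - y)\<^sup>2 / 8) powr (1/4) * t powr (1/4) / sqrt (8 * pi)"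
    using a(2) by (simp add: ennreal_plus[symmetric] del: ennreal_plus)
  then show ?thesis
    using integral_heat_integrand_mult[OF t t, of x y] a by simp
qed

lemma integral_heat_integrand_mult_far_le:
  assumes "0 \<le> a" "a < b"
  shows "(\<integral>w. heat_integrand a 0 w * heat_integrand b 0 w \<partial>lborel) \<le> a / sqrt (4 * pi * (b - a))"
  using assms heat_covariance_far_le[OF assms]
  by (simp add: integral_heat_integrand_mult enn2real_leI)

lemma integral_lincomb_square:
  fixes f h :: "'a::euclidean_space \<Rightarrow> real"
  assumes "integrable lborel (\<lambda>z. (f z)\<^sup>2)" "integrable lborel (\<lambda>z. (h z)\<^sup>2)" "integrable lborel (\<lambda>z. f z * h z)"
  shows "(\<integral>z. (c * f z + d * h z)\<^sup>2 \<partial>lborel)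
     = c\<^sup>2 * (\<integral>z. (f z)\<^sup>2 \<partial>lborel) + 2 * c * d * (\<integral>z. f z * h z \<partial>lborel) + d\<^sup>2 * (\<integral>z. (h z)\<^sup>2 \<partial>lborel)"
proof -
  have "(\<lambda>z. (c * f z + d * h z)\<^sup>2) = (\<lambda>z. c\<^sup>2 * (f z)\<^sup>2 + (2 * c * d) * (f z * h z) + d\<^sup>2 * (h z)\<^sup>2)"
    by (rule ext) (simp add: power2_sum power_mult_distrib algebra_simps)
  then show ?thesis using assms by simp
qed

lemma integral_heat_integrand_diff_square:
  assumes t: "t \<ge> 0" and s: "s \<ge> 0"
  shows "(\<integral>z. (heat_integrand t x z - heat_integrand s y z)\<^sup>2 \<partial>lborel)
     = (\<integral>z. (heat_integrand t x z)\<^sup>2 \<partial>lborel) - 2 * (\<integral>z. heat_integrand t x z * heat_integrand s y z \<partial>lborel)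
       + (\<integral>z. (heat_integrand s y z)\<^sup>2 \<partial>lborel)"
  using integral_lincomb_square[OF integrable_heat_integrand_square[OF t] integrable_heat_integrand_square[OF s]
      integrable_heat_integrand_mult[OF t s], where c=1 and d="-1"]
  by simp

lemma sqrt_add_le: "0 \<le> t \<Longrightarrow> 0 \<le> s \<Longrightarrow> sqrt t + sqrt s \<le> sqrt 2 * sqrt (t + s)"
proof -
  assume t: "0 \<le> t" and s: "0 \<le> s"
  have "2 * sqrt t * sqrt s \<le> (sqrt t)\<^sup>2 + (sqrt s)\<^sup>2" by (rule sum_squares_bound)
  then have "(sqrt t + sqrt s)\<^sup>2 \<le> (sqrt (2 * (t + s)))\<^sup>2" using t s by (simp add: power2_sum)
  then have "sqrt t + sqrt s \<le> sqrt (2 * (t + s))" by (rule power2_le_imp_le) (use t s in simp)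
  then show ?thesis by (simp only: real_sqrt_mult)
qed

lemma heat_integrand_time_increment_le:
  assumes s: "0 \<le> s" "s \<le> t"
  shows "(\<integral>z. (heat_integrand t x z - heat_integrand s x z)\<^sup>2 \<partial>lborel) \<le> sqrt (t - s)"
proof (cases "s = t")
  case False
  then have st: "s < t" using s by simp
  have t: "t \<ge> 0" using s by simp
  have "(\<integral>z. (heat_integrand t x z - heat_integrand s x z)\<^sup>2 \<partial>lborel)
      = (sqrt t + sqrt s) / (sqrt 2 * sqrt pi) - sqrt (t + s) / sqrt pi + sqrt (t - s) / sqrt pi"
    unfolding integral_heat_integrand_diff_square[OF t s(1)] integral_heat_integrand_square[OF t]
      integral_heat_integrand_square[OF s(1)] integral_heat_integrand_mult_time[OF s(1) st]
    by (simp add: real_sqrt_mult field_simps)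
  also have "(sqrt t + sqrt s) / (sqrt 2 * sqrt pi) \<le> sqrt (t + s) / sqrt pi"
    using divide_right_mono[OF sqrt_add_le[OF t s(1)], of "sqrt 2 * sqrt pi"] by simp
  then have "(sqrt t + sqrt s) / (sqrt 2 * sqrt pi) - sqrt (t + s) / sqrt pi + sqrt (t - s) / sqrt pi
      \<le> sqrt (t - s) / sqrt pi" by simp
  also have "\<dots> \<le> sqrt (t - s)"
  proof -
    have "1 \<le> sqrt pi" using pi_gt3 by simp
    then show ?thesis using st by (simp add: divide_le_eq mult_le_cancel_left1)
  qed
  finally show ?thesis .
qed simp

lemma powr_quarter_square: "((x::real)\<^sup>2) powr (1/4) = sqrt \<bar>x\<bar>"
proof (cases "x = 0")
  case False
  then have "x\<^sup>2 = \<bar>x\<bar> powr 2" by (simp add: powr_numeral)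
  then have "(x\<^sup>2) powr (1/4) = \<bar>x\<bar> powr (2 * (1/4))" by (simp only: powr_powr)
  also have "\<dots> = sqrt \<bar>x\<bar>" by (simp add: powr_half_sqrt)
  finally show ?thesis .
qed simp

lemma heat_integrand_space_increment_le:
  assumes t: "t \<ge> 0"
  shows "(\<integral>z. (heat_integrand t x z - heat_integrand t y z)\<^sup>2 \<partial>lborel) \<le> 2 * sqrt \<bar>x - y\<bar> * t powr (1/4)"
proof -
  define D where "D = 4 * ((x - y)\<^sup>2 / 8) powr (1/4) * t powr (1/4) / sqrt (8 * pi)"
  have "(\<integral>z. (heat_integrand t x z - heat_integrand t y z)\<^sup>2 \<partial>lborel)
      = 2 * (sqrt t / sqrt (2 * pi)) - 2 * (\<integral>z. heat_integrand t x z * heat_integrand t y z \<partial>lborel)"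
    unfolding integral_heat_integrand_diff_square[OF t t] integral_heat_integrand_square[OF t] by simp
  also have "\<dots> \<le> 2 * D"
    using integral_heat_integrand_mult_space_ge[OF t, of x y] unfolding D_def by simp
  also have "D \<le> 4 * sqrt \<bar>x - y\<bar> * t powr (1/4) / sqrt (8 * pi)"
    unfolding D_def powr_quarter_square[symmetric]
    by (intro divide_right_mono mult_right_mono mult_left_mono powr_mono2) auto
  also have "\<dots> \<le> 4 * sqrt \<bar>x - y\<bar> * t powr (1/4) / 4"
  proof -
    have "sqrt 16 \<le> sqrt (8 * pi)" using pi_gt3 by (intro real_sqrt_le_mono) simp
    then show ?thesis by (intro divide_left_mono) auto
  qed
  finally show ?thesis by simp
qed

section \<open>Gaussian estimates\<close>

lemma exp_neg_square_split:
  fixes a v \<sigma> :: real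
  assumes "0 \<le> a" "a \<le> v"
  shows "exp (- v\<^sup>2 / (2 * \<sigma>\<^sup>2)) \<le> exp (- a\<^sup>2 / (2 * \<sigma>\<^sup>2)) * exp (- (v - a)\<^sup>2 / (2 * \<sigma>\<^sup>2))"
proof -
  have "v\<^sup>2 = a\<^sup>2 + (v - a)\<^sup>2 + 2 * a * (v - a)" by (simp add: power2_eq_square algebra_simps)
  moreover have "2 * a * (v - a) \<ge> 0" using assms by simp
  ultimately have "- v\<^sup>2 / (2 * \<sigma>\<^sup>2) \<le> (- a\<^sup>2 + - (v - a)\<^sup>2) / (2 * \<sigma>\<^sup>2)"
    by (intro divide_right_mono) auto
  also have "\<dots> = - a\<^sup>2 / (2 * \<sigma>\<^sup>2) + - (v - a)\<^sup>2 / (2 * \<sigma>\<^sup>2)" by (rule add_divide_distrib)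
  finally show ?thesis by (simp add: exp_add[symmetric])
qed

lemma normal_density_tail_le:
  assumes \<sigma>: "\<sigma> > 0" and a: "a \<ge> 0"
  shows "normal_density 0 \<sigma> v * indicator {v. a \<le> \<bar>v\<bar>} v
     \<le> exp (- a\<^sup>2 / (2 * \<sigma>\<^sup>2)) * (normal_density a \<sigma> v + normal_density (-a) \<sigma> v)"
proof (cases "a \<le> \<bar>v\<bar>")
  case True
  define E where "E u = exp (- u\<^sup>2 / (2 * \<sigma>\<^sup>2))" for u
  have E0: "\<And>u. E u > 0" by (simp add: E_def)
  have "E v \<le> E a * (E (v - a) + E (v - - a))"
  proof (cases "v \<ge> 0")
    case True
    then have "E v \<le> E a * E (v - a)" using \<open>a \<le> \<bar>v\<bar>\<close> a unfolding E_def by (intro exp_neg_square_split) auto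
    then show ?thesis using E0 by (smt (verit) mult_left_mono)
  next
    case False
    then have "E (-v) \<le> E a * E (-v - a)" using \<open>a \<le> \<bar>v\<bar>\<close> a unfolding E_def by (intro exp_neg_square_split) auto
    moreover have "E (-v) = E v" "E (-v - a) = E (v - - a)" unfolding E_def by (simp_all add: power2_commute add.commute)
    ultimately show ?thesis using E0 by (smt (verit) mult_left_mono)
  qed
  moreover have "\<And>m. normal_density m \<sigma> v = E (v - m) / sqrt (2 * pi * \<sigma>\<^sup>2)"
    by (simp add: normal_density_def E_def)
  ultimately show ?thesis using True by (simp add: E_def divide_right_mono distrib_left flip: add_divide_distrib)
qed (simp add: add_nonneg_nonneg)

lemma integral_normal_density_tail_le:
  assumes \<sigma>: "\<sigma> > 0" and a: "a \<ge> 0"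
  shows "(\<integral>v. normal_density 0 \<sigma> v * indicator {v. a \<le> \<bar>v\<bar>} v \<partial>lborel) \<le> 2 * exp (- a\<^sup>2 / (2 * \<sigma>\<^sup>2))"
proof -
  have "(\<integral>v. normal_density 0 \<sigma> v * indicator {v. a \<le> \<bar>v\<bar>} v \<partial>lborel)
     \<le> (\<integral>v. exp (- a\<^sup>2 / (2 * \<sigma>\<^sup>2)) * (normal_density a \<sigma> v + normal_density (-a) \<sigma> v) \<partial>lborel)"
  proof (rule integral_mono)
    show "integrable lborel (\<lambda>v. normal_density 0 \<sigma> v * indicator {v. a \<le> \<bar>v\<bar>} v)"
      by (rule Bochner_Integration.integrable_bound[OF integrable_normal_density[where \<mu>=0 and \<sigma>=\<sigma>, OF \<sigma>]])
        (auto simp: indicator_def)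
    show "integrable lborel (\<lambda>v. exp (- a\<^sup>2 / (2 * \<sigma>\<^sup>2)) * (normal_density a \<sigma> v + normal_density (-a) \<sigma> v))"
      using \<sigma> by (intro integrable_mult_right Bochner_Integration.integrable_add) auto
  qed (use normal_density_tail_le[OF \<sigma> a] in auto)
  also have "\<dots> = 2 * exp (- a\<^sup>2 / (2 * \<sigma>\<^sup>2))"
    using \<sigma> by simp
  finally show ?thesis .
qed

lemma (in prob_space) prob_abs_ge_normal:
  assumes D: "distributed M lborel X (\<lambda>v. ennreal (normal_density 0 \<sigma> v))"
    and \<sigma>: "\<sigma> > 0" and a: "a \<ge> 0"
  shows "prob {\<omega> \<in> space M. a \<le> \<bar>X \<omega>\<bar>} \<le> 2 * exp (- a\<^sup>2 / (2 * \<sigma>\<^sup>2))"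
proof -
  have [measurable]: "X \<in> borel_measurable M" using distributed_measurable[OF D] by simp
  have "(\<integral>\<omega>. indicator {v. a \<le> \<bar>v\<bar>} (X \<omega>) \<partial>M) = (\<integral>\<omega>. indicator {\<omega> \<in> space M. a \<le> \<bar>X \<omega>\<bar>} \<omega> \<partial>M)"
    by (rule Bochner_Integration.integral_cong) (auto simp: indicator_def)
  also have "\<dots> = prob {\<omega> \<in> space M. a \<le> \<bar>X \<omega>\<bar>}"
    by (simp add: Int_absorb2 subset_iff)
  finally have "prob {\<omega> \<in> space M. a \<le> \<bar>X \<omega>\<bar>} = (\<integral>\<omega>. indicator {v. a \<le> \<bar>v\<bar>} (X \<omega>) \<partial>M)" ..
  also have "\<dots> = (\<integral>v. normal_density 0 \<sigma> v * indicator {v. a \<le> \<bar>v\<bar>} v \<partial>lborel)"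
    by (rule distributed_integral[OF D, symmetric]) auto
  also have "\<dots> \<le> 2 * exp (- a\<^sup>2 / (2 * \<sigma>\<^sup>2))" by (rule integral_normal_density_tail_le[OF \<sigma> a])
  finally show ?thesis .
qed

lemma normal_density_mult_exp:
  assumes \<sigma>: "\<sigma> > 0"
  shows "normal_density 0 \<sigma> v * exp (l * v + c) = exp (l\<^sup>2 * \<sigma>\<^sup>2 / 2 + c) * normal_density (l * \<sigma>\<^sup>2) \<sigma> v"
proof -
  have "- v\<^sup>2 / (2 * \<sigma>\<^sup>2) + (l * v + c) = l\<^sup>2 * \<sigma>\<^sup>2 / 2 + c + - (v - l * \<sigma>\<^sup>2)\<^sup>2 / (2 * \<sigma>\<^sup>2)"
    using \<sigma> by (simp add: divide_simps) (simp add: power2_eq_square algebra_simps)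
  then have "exp (- v\<^sup>2 / (2 * \<sigma>\<^sup>2)) * exp (l * v + c) = exp (l\<^sup>2 * \<sigma>\<^sup>2 / 2 + c) * exp (- (v - l * \<sigma>\<^sup>2)\<^sup>2 / (2 * \<sigma>\<^sup>2))"
    by (simp add: exp_add[symmetric])
  then show ?thesis by (simp add: normal_density_def algebra_simps)
qed

section \<open>White noise integrals\<close>

lemma wn_integrand_lincomb:
  assumes f: "wn_integrand f" and h: "wn_integrand h"
  shows "wn_integrand (\<lambda>z. c * f z + d * h z)"
proof -
  have [measurable]: "f \<in> borel_measurable lborel" "h \<in> borel_measurable lborel"
    using f h by (auto simp: wn_integrand_def)
  have "integrable lborel (\<lambda>z. (c * f z + d * h z)\<^sup>2)"
  proof (rule Bochner_Integration.integrable_bound)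
    show "integrable lborel (\<lambda>z. 2 * c\<^sup>2 * (f z)\<^sup>2 + 2 * d\<^sup>2 * (h z)\<^sup>2)"
      using f h by (auto simp: wn_integrand_def)
    show "AE z in lborel. norm ((c * f z + d * h z)\<^sup>2) \<le> norm (2 * c\<^sup>2 * (f z)\<^sup>2 + 2 * d\<^sup>2 * (h z)\<^sup>2)"
    proof (rule AE_I2)
      fix z
      have "2 * (c * f z) * (d * h z) \<le> (c * f z)\<^sup>2 + (d * h z)\<^sup>2" by (rule sum_squares_bound)
      then have "(c * f z + d * h z)\<^sup>2 \<le> 2 * c\<^sup>2 * (f z)\<^sup>2 + 2 * d\<^sup>2 * (h z)\<^sup>2"
        by (simp add: power2_sum power_mult_distrib)
      then show "norm ((c * f z + d * h z)\<^sup>2) \<le> norm (2 * c\<^sup>2 * (f z)\<^sup>2 + 2 * d\<^sup>2 * (h z)\<^sup>2)"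
        by simp
    qed
  qed simp
  then show ?thesis using f h by (auto simp: wn_integrand_def)
qed

locale heat_white_noise =
  fixes M :: "'a measure" and W :: "(real \<times> real \<Rightarrow> real) \<Rightarrow> 'a \<Rightarrow> real"
    and g :: "real \<Rightarrow> real \<Rightarrow> 'a \<Rightarrow> real"
  assumes white_noise: "white_noise_integral M W"
    and measurable_g[measurable]: "\<And>t x. t \<ge> 0 \<Longrightarrow> g t x \<in> borel_measurable M"
    and g_eq_W: "\<And>t x. t \<ge> 0 \<Longrightarrow> AE \<omega> in M. g t x \<omega> = W (heat_integrand t x) \<omega>"
begin

sublocale prob_space M
  using white_noise by (simp add: white_noise_integral_def)

lemma measurable_W: "wn_integrand f \<Longrightarrow> W f \<in> borel_measurable M"
  using white_noise by (simp add: white_noise_integral_def)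

lemma distributed_W:
  "wn_integrand f \<Longrightarrow> (\<integral>z. (f z)\<^sup>2 \<partial>lborel) > 0 \<Longrightarrow>
   distributed M lborel (W f) (\<lambda>v. ennreal (normal_density 0 (sqrt (\<integral>z. (f z)\<^sup>2 \<partial>lborel)) v))"
  using white_noise by (simp add: white_noise_integral_def)

lemma AE_W_eq_0: "wn_integrand f \<Longrightarrow> (\<integral>z. (f z)\<^sup>2 \<partial>lborel) = 0 \<Longrightarrow> AE \<omega> in M. W f \<omega> = 0"
  using white_noise by (simp add: white_noise_integral_def)

lemma AE_W_lincomb:
  "wn_integrand f \<Longrightarrow> wn_integrand h \<Longrightarrow> AE \<omega> in M. W (\<lambda>z. c * f z + d * h z) \<omega> = c * W f \<omega> + d * W h \<omega>"
  using white_noise unfolding white_noise_integral_def by blast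

lemma prob_abs_W_ge:
  assumes f: "wn_integrand f" and B: "(\<integral>z. (f z)\<^sup>2 \<partial>lborel) \<le> B" "0 < B" and a: "0 \<le> a"
  shows "prob {\<omega> \<in> space M. a \<le> \<bar>W f \<omega>\<bar>} \<le> 2 * exp (- a\<^sup>2 / (2 * B))"
proof -
  define V where "V = (\<integral>z. (f z)\<^sup>2 \<partial>lborel)"
  have V0: "V \<ge> 0" unfolding V_def by (rule integral_nonneg_AE) auto
  have [measurable]: "W f \<in> borel_measurable M" using measurable_W[OF f] .
  show ?thesis
  proof (cases "V = 0")
    case True
    then have "AE \<omega> in M. W f \<omega> = 0" using AE_W_eq_0[OF f] by (simp add: V_def)
    then have "a \<noteq> 0 \<Longrightarrow> prob {\<omega> \<in> space M. a \<le> \<bar>W f \<omega>\<bar>} = prob {}"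
      using a by (intro measure_eq_AE) auto
    then show ?thesis by (cases "a = 0") (simp_all add: prob_space)
  next
    case False
    then have Vp: "V > 0" using V0 by simp
    have "prob {\<omega> \<in> space M. a \<le> \<bar>W f \<omega>\<bar>} \<le> 2 * exp (- a\<^sup>2 / (2 * (sqrt V)\<^sup>2))"
      using distributed_W[OF f] Vp a by (intro prob_abs_ge_normal) (simp_all add: V_def)
    also have "\<dots> \<le> 2 * exp (- a\<^sup>2 / (2 * B))"
      using Vp B V0 unfolding V_def[symmetric] by (simp add: divide_left_mono)
    finally show ?thesis .
  qed
qed

lemma
  assumes f: "wn_integrand f" and Vp: "(\<integral>z. (f z)\<^sup>2 \<partial>lborel) > 0"
  shows integrable_exp_W: "integrable M (\<lambda>\<omega>. exp (l * W f \<omega> + c))"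
    and expectation_exp_W: "expectation (\<lambda>\<omega>. exp (l * W f \<omega> + c)) = exp (l\<^sup>2 * (\<integral>z. (f z)\<^sup>2 \<partial>lborel) / 2 + c)"
proof -
  define \<sigma> where "\<sigma> = sqrt (\<integral>z. (f z)\<^sup>2 \<partial>lborel)"
  have \<sigma>p: "\<sigma> > 0" and \<sigma>2: "\<sigma>\<^sup>2 = (\<integral>z. (f z)\<^sup>2 \<partial>lborel)"
    using Vp by (simp_all add: \<sigma>_def)
  have D: "distributed M lborel (W f) (\<lambda>v. ennreal (normal_density 0 \<sigma> v))"
    using distributed_W[OF f Vp] by (simp add: \<sigma>_def)
  have density: "(\<lambda>v. normal_density 0 \<sigma> v * exp (l * v + c)) = (\<lambda>v. exp (l\<^sup>2 * \<sigma>\<^sup>2 / 2 + c) * normal_density (l * \<sigma>\<^sup>2) \<sigma> v)"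
    using normal_density_mult_exp[OF \<sigma>p] by auto
  show "integrable M (\<lambda>\<omega>. exp (l * W f \<omega> + c))"
    using distributed_integrable[OF D, of "\<lambda>v. exp (l * v + c)"] \<sigma>p by (simp add: density)
  have "expectation (\<lambda>\<omega>. exp (l * W f \<omega> + c)) = (\<integral>v. normal_density 0 \<sigma> v * exp (l * v + c) \<partial>lborel)"
    by (rule distributed_integral[OF D, symmetric]) auto
  also have "\<dots> = exp (l\<^sup>2 * \<sigma>\<^sup>2 / 2 + c)" using \<sigma>p by (simp add: density)
  finally show "expectation (\<lambda>\<omega>. exp (l * W f \<omega> + c)) = exp (l\<^sup>2 * (\<integral>z. (f z)\<^sup>2 \<partial>lborel) / 2 + c)"
    unfolding \<sigma>2 .
qed

lemma AE_g_lincomb: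
  assumes "t \<ge> 0" and "s \<ge> 0"
  shows "AE \<omega> in M. c * g t x \<omega> + d * g s y \<omega> = W (\<lambda>z. c * heat_integrand t x z + d * heat_integrand s y z) \<omega>"
  using g_eq_W[OF assms(1), of x] g_eq_W[OF assms(2), of y]
    AE_W_lincomb[OF wn_integrand_heat_integrand[OF assms(1), of x] wn_integrand_heat_integrand[OF assms(2), of y], of c d]
  by eventually_elim simp

lemma prob_abs_g_diff_ge:
  assumes t: "t \<ge> 0" and s: "s \<ge> 0"
    and B: "(\<integral>z. (heat_integrand t x z - heat_integrand s y z)\<^sup>2 \<partial>lborel) \<le> B" "0 < B" and a: "0 \<le> a"
  shows "prob {\<omega> \<in> space M. a \<le> \<bar>g t x \<omega> - g s y \<omega>\<bar>} \<le> 2 * exp (- a\<^sup>2 / (2 * B))"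
proof -
  define h where "h = (\<lambda>z. 1 * heat_integrand t x z + (-1) * heat_integrand s y z)"
  have wh: "wn_integrand h" unfolding h_def by (intro wn_integrand_lincomb wn_integrand_heat_integrand t s)
  have [measurable]: "W h \<in> borel_measurable M" "g t x \<in> borel_measurable M" "g s y \<in> borel_measurable M"
    using measurable_W[OF wh] t s by auto
  have "AE \<omega> in M. g t x \<omega> - g s y \<omega> = W h \<omega>"
    using AE_g_lincomb[OF t s, of 1 x "-1" y] unfolding h_def by simp
  then have "prob {\<omega> \<in> space M. a \<le> \<bar>g t x \<omega> - g s y \<omega>\<bar>} = prob {\<omega> \<in> space M. a \<le> \<bar>W h \<omega>\<bar>}"
    by (intro measure_eq_AE) auto
  also have "\<dots> \<le> 2 * exp (- a\<^sup>2 / (2 * B))"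
    using B a by (intro prob_abs_W_ge[OF wh]) (simp_all add: h_def)
  finally show ?thesis .
qed

end

section \<open>Large values at the sample times\<close>

definition scale :: "nat \<Rightarrow> real" where "scale n = 2 ^ (n + 1)"
definition sample_time :: "nat \<Rightarrow> real" where "sample_time n = scale n ^ 4"
definition sample_var :: "nat \<Rightarrow> real" where "sample_var n = (scale n)\<^sup>2 / sqrt (2 * pi)"
definition sample_sd :: "nat \<Rightarrow> real" where "sample_sd n = sqrt (sample_var n)"
definition sample_integrand :: "nat \<Rightarrow> real \<times> real \<Rightarrow> real" where
  "sample_integrand n = heat_integrand (sample_time n) 0"
definition sample_corr :: "nat \<Rightarrow> nat \<Rightarrow> real" where
  "sample_corr a b = (\<integral>z. sample_integrand a z * sample_integrand b z \<partial>lborel) / (sample_sd a * sample_sd b)"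

lemma real_sqrt_power4: "sqrt ((x::real) ^ 4) = x\<^sup>2"
proof -
  have "x ^ 4 = (x\<^sup>2)\<^sup>2" by (simp flip: power_mult)
  then have "sqrt (x ^ 4) = \<bar>x\<^sup>2\<bar>" by (simp only: real_sqrt_abs)
  then show ?thesis by simp
qed

lemma scale_pos: "scale n > 0" by (simp add: scale_def)
lemma scale_ge_2: "scale n \<ge> 2"
  using power_increasing[of 1 "n + 1" "2::real"] by (simp add: scale_def)
lemma sample_time_nonneg: "sample_time n \<ge> 0" by (simp add: sample_time_def)
lemma sqrt_sample_time: "sqrt (sample_time n) = (scale n)\<^sup>2"
  by (simp add: sample_time_def real_sqrt_power4)
lemma sample_var_pos: "sample_var n > 0" using scale_pos[of n] by (simp add: sample_var_def)
lemma sample_sd_pos: "sample_sd n > 0" by (simp add: sample_sd_def sample_var_pos)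
lemma sample_sd_square: "(sample_sd n)\<^sup>2 = sample_var n"
  using sample_var_pos by (simp add: sample_sd_def less_imp_le)
lemma sample_sd_eq: "sample_sd n = scale n / sqrt (sqrt (2 * pi))"
  using scale_pos[of n] by (simp add: sample_sd_def sample_var_def real_sqrt_divide)

lemma integral_sample_integrand_square: "(\<integral>z. (sample_integrand n z)\<^sup>2 \<partial>lborel) = sample_var n"
  by (simp add: sample_integrand_def integral_heat_integrand_square[OF sample_time_nonneg]
      sqrt_sample_time sample_var_def)

lemma sample_sd_mult: "sample_sd a * sample_sd b = scale a * scale b / sqrt (2 * pi)"
proof -
  have "sample_sd a * sample_sd b = sqrt (sample_var a * sample_var b)"
    by (simp add: sample_sd_def real_sqrt_mult)
  also have "sample_var a * sample_var b = (scale a * scale b)\<^sup>2 / (sqrt (2 * pi))\<^sup>2"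
    by (simp add: sample_var_def power_mult_distrib power2_eq_square)
  also have "sqrt \<dots> = scale a * scale b / sqrt (2 * pi)"
    using scale_pos[of a] scale_pos[of b] by (simp add: real_sqrt_divide)
  finally show ?thesis .
qed

lemma sample_corr_nonneg: "sample_corr a b \<ge> 0"
proof -
  have "(\<integral>z. sample_integrand a z * sample_integrand b z \<partial>lborel) \<ge> 0"
    by (rule integral_nonneg_AE) (auto simp: sample_integrand_def heat_integrand_nonneg)
  then show ?thesis using sample_sd_pos[of a] sample_sd_pos[of b] by (simp add: sample_corr_def)
qed

lemma sample_corr_commute: "sample_corr a b = sample_corr b a"
  by (simp add: sample_corr_def mult.commute)

lemma sample_corr_diag: "sample_corr a a = 1"
  using integral_sample_integrand_square[of a] sample_sd_square[of a] sample_var_pos[of a]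
  by (simp add: sample_corr_def power2_eq_square)

lemma heat_far_ratio_le:
  fixes A B :: real
  assumes A0: "0 < A" and BA2: "2 * A \<le> B"
  shows "A ^ 4 / sqrt (4 * pi * (B ^ 4 - A ^ 4)) / (A * B / sqrt (2 * pi)) \<le> A / B"
proof -
  have B0: "0 < B" using A0 BA2 by simp
  have A4: "16 * A ^ 4 \<le> B ^ 4"
    using power_mono[OF BA2, of 4] A0 by (simp add: power_mult_distrib)
  have "0 < A ^ 4" using A0 by simp
  have sq: "sqrt (2 * pi) * B\<^sup>2 \<le> sqrt (4 * pi * (B ^ 4 - A ^ 4))"
  proof -
    have "sqrt (2 * pi) * B\<^sup>2 = sqrt (2 * pi * B ^ 4)"
      by (simp add: real_sqrt_mult real_sqrt_power4)
    also have "\<dots> \<le> sqrt (4 * pi * (B ^ 4 - A ^ 4))"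
    proof (rule real_sqrt_le_mono)
      have "2 * B ^ 4 \<le> 4 * (B ^ 4 - A ^ 4)" using A4 \<open>0 < A ^ 4\<close> by (smt (verit))
      then show "2 * pi * B ^ 4 \<le> 4 * pi * (B ^ 4 - A ^ 4)"
        using mult_left_mono[of "2 * B ^ 4" "4 * (B ^ 4 - A ^ 4)" pi] by (simp add: algebra_simps)
    qed
    finally show ?thesis .
  qed
  have pos: "0 < sqrt (2 * pi) * B\<^sup>2" using B0 by simp
  then have "0 < sqrt (4 * pi * (B ^ 4 - A ^ 4))" using sq by linarith
  then have "A ^ 4 / sqrt (4 * pi * (B ^ 4 - A ^ 4)) / (A * B / sqrt (2 * pi))
      \<le> (A ^ 4 / (sqrt (2 * pi) * B\<^sup>2)) / (A * B / sqrt (2 * pi))"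
    using sq pos A0 B0 mult_pos_pos[OF _ pos] by (intro divide_right_mono divide_left_mono) auto
  also have "\<dots> = (A / B) * (A / B)\<^sup>2"
    using A0 B0 by (simp add: divide_simps) (simp add: power2_eq_square power4_eq_xxxx)
  also have "\<dots> \<le> A / B"
    using A0 B0 BA2 mult_left_mono[of "(A / B)\<^sup>2" 1 "A / B"] by (simp add: power_le_one)
  finally show ?thesis .
qed

lemma sample_corr_far_le:
  assumes ab: "a + D \<le> b" and D: "D > 0"
  shows "sample_corr a b \<le> 1 / 2 ^ D"
proof -
  define A where "A = scale a"
  define B where "B = scale b"
  have A0: "A > 0" by (simp add: A_def scale_pos)
  have BA: "B = 2 ^ (b - a) * A"
    unfolding A_def B_def scale_def using ab D by (simp add: power_add[symmetric])
  have BA2: "2 * A \<le> B"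
    using power_increasing[of 1 "b - a" "2::real"] ab D A0 unfolding BA by (intro mult_right_mono) auto
  have "A ^ 4 < B ^ 4" using A0 BA2 by (intro power_strict_mono) auto
  then have inner: "(\<integral>z. sample_integrand a z * sample_integrand b z \<partial>lborel) \<le> A ^ 4 / sqrt (4 * pi * (B ^ 4 - A ^ 4))"
    using integral_heat_integrand_mult_far_le[of "A ^ 4" "B ^ 4"] A0
    by (simp add: sample_integrand_def sample_time_def A_def B_def)
  have "sample_corr a b \<le> (A ^ 4 / sqrt (4 * pi * (B ^ 4 - A ^ 4))) / (A * B / sqrt (2 * pi))"
    unfolding sample_corr_def sample_sd_mult A_def[symmetric] B_def[symmetric]
    using inner A0 BA2 by (intro divide_right_mono) auto
  also have "\<dots> \<le> A / B" by (rule heat_far_ratio_le[OF A0 BA2])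
  also have "A / B = 1 / 2 ^ (b - a)" unfolding BA using A0 by simp
  also have "\<dots> \<le> 1 / 2 ^ D" using ab by (intro divide_left_mono power_increasing) auto
  finally show ?thesis .
qed

lemma sample_corr_separated_le:
  assumes "D > 0" "i \<noteq> l"
  shows "sample_corr (K + i * D) (K + l * D) \<le> 1 / 2 ^ D"
proof (cases "i < l")
  case True
  then have "K + i * D + D \<le> K + l * D" using mult_le_mono1[of "Suc i" l D] by simp
  then show ?thesis using sample_corr_far_le assms(1) by blast
next
  case False
  then have "K + l * D + D \<le> K + i * D" using mult_le_mono1[of "Suc l" i D] assms(2) by simp
  then show ?thesis using sample_corr_far_le[of _ D] sample_corr_commute assms(1) by metis
qed

context heat_white_noise
begin

definition exp_sample :: "nat \<Rightarrow> 'a \<Rightarrow> real" where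
  "exp_sample n \<omega> = exp (2 * (g (sample_time n) 0 \<omega> / sample_sd n) - 2)"

lemma measurable_exp_sample[measurable]: "exp_sample n \<in> borel_measurable M"
  using measurable_g[OF sample_time_nonneg, of n 0] unfolding exp_sample_def by measurable

lemma wn_integrand_sample_integrand: "wn_integrand (sample_integrand n)"
  unfolding sample_integrand_def by (rule wn_integrand_heat_integrand[OF sample_time_nonneg])

lemma AE_exp_sample_mult_eq:
  "AE \<omega> in M. exp_sample a \<omega> * exp_sample b \<omega> =
     exp (2 * W (\<lambda>z. (1 / sample_sd a) * sample_integrand a z + (1 / sample_sd b) * sample_integrand b z) \<omega> - 4)"
  using AE_g_lincomb[OF sample_time_nonneg sample_time_nonneg, of "1 / sample_sd a" a 0 "1 / sample_sd b" b 0]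
  by eventually_elim (simp add: exp_sample_def sample_integrand_def exp_add[symmetric] algebra_simps)

lemma
  shows integrable_exp_sample_mult: "integrable M (\<lambda>\<omega>. exp_sample a \<omega> * exp_sample b \<omega>)"
    and expectation_exp_sample_mult: "expectation (\<lambda>\<omega>. exp_sample a \<omega> * exp_sample b \<omega>) = exp (4 * sample_corr a b)"
proof -
  define h where "h = (\<lambda>z. (1 / sample_sd a) * sample_integrand a z + (1 / sample_sd b) * sample_integrand b z)"
  have wh: "wn_integrand h" unfolding h_def by (intro wn_integrand_lincomb wn_integrand_sample_integrand)
  have "(\<integral>z. (h z)\<^sup>2 \<partial>lborel) = (1 / sample_sd a)\<^sup>2 * sample_var a
      + 2 * (1 / sample_sd a) * (1 / sample_sd b) * (\<integral>z. sample_integrand a z * sample_integrand b z \<partial>lborel)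
      + (1 / sample_sd b)\<^sup>2 * sample_var b"
    unfolding h_def integral_sample_integrand_square[symmetric] sample_integrand_def
    by (intro integral_lincomb_square integrable_heat_integrand_square integrable_heat_integrand_mult sample_time_nonneg)
  also have "\<dots> = 2 + 2 * sample_corr a b"
    using sample_sd_square[of a] sample_sd_square[of b] sample_var_pos[of a] sample_var_pos[of b]
      sample_sd_pos[of a] sample_sd_pos[of b]
    by (simp add: sample_corr_def power_divide field_simps)
  finally have var: "(\<integral>z. (h z)\<^sup>2 \<partial>lborel) = 2 + 2 * sample_corr a b" .
  then have var_pos: "(\<integral>z. (h z)\<^sup>2 \<partial>lborel) > 0" using sample_corr_nonneg[of a b] by simp
  have ae: "AE \<omega> in M. exp_sample a \<omega> * exp_sample b \<omega> = exp (2 * W h \<omega> + (-4))"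
    using AE_exp_sample_mult_eq[of a b] unfolding h_def by simp
  have [measurable]: "W h \<in> borel_measurable M" by (rule measurable_W[OF wh])
  show "integrable M (\<lambda>\<omega>. exp_sample a \<omega> * exp_sample b \<omega>)"
    using integrable_exp_W[OF wh var_pos, of 2 "-4"] by (subst integrable_cong_AE[OF _ _ ae]) auto
  have "expectation (\<lambda>\<omega>. exp_sample a \<omega> * exp_sample b \<omega>) = expectation (\<lambda>\<omega>. exp (2 * W h \<omega> + (-4)))"
    by (rule integral_cong_AE) (use ae in auto)
  also have "\<dots> = exp (4 * sample_corr a b)"
    using expectation_exp_W[OF wh var_pos, of 2 "-4"] unfolding var by (simp add: algebra_simps)
  finally show "expectation (\<lambda>\<omega>. exp_sample a \<omega> * exp_sample b \<omega>) = exp (4 * sample_corr a b)" .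
qed

lemma
  shows integrable_exp_sample: "integrable M (exp_sample a)"
    and expectation_exp_sample: "expectation (exp_sample a) = 1"
proof -
  define h where "h = (\<lambda>z. (1 / sample_sd a) * sample_integrand a z + 0 * sample_integrand a z)"
  have wh: "wn_integrand h" unfolding h_def by (intro wn_integrand_lincomb wn_integrand_sample_integrand)
  have var: "(\<integral>z. (h z)\<^sup>2 \<partial>lborel) = 1"
    using integral_sample_integrand_square[of a] sample_sd_square[of a] sample_var_pos[of a]
    by (simp add: h_def power_mult_distrib power_divide)
  then have var_pos: "(\<integral>z. (h z)\<^sup>2 \<partial>lborel) > 0" by simp
  have ae: "AE \<omega> in M. exp_sample a \<omega> = exp (2 * W h \<omega> + (-2))"
    using AE_g_lincomb[OF sample_time_nonneg sample_time_nonneg, of "1 / sample_sd a" a 0 0 a 0]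
    by eventually_elim (simp add: exp_sample_def h_def sample_integrand_def)
  have [measurable]: "W h \<in> borel_measurable M" by (rule measurable_W[OF wh])
  show "integrable M (exp_sample a)"
    using integrable_exp_W[OF wh var_pos, of 2 "-2"] by (subst integrable_cong_AE[OF _ _ ae]) auto
  have "expectation (exp_sample a) = expectation (\<lambda>\<omega>. exp (2 * W h \<omega> + (-2)))"
    by (rule integral_cong_AE) (use ae in auto)
  also have "\<dots> = 1"
    using expectation_exp_W[OF wh var_pos, of 2 "-2"] unfolding var by simp
  finally show "expectation (exp_sample a) = 1" .
qed

lemma
  shows integrable_exp_sample_centred_mult:
      "integrable M (\<lambda>\<omega>. (exp_sample a \<omega> - 1) * (exp_sample b \<omega> - 1))"
    and expectation_exp_sample_centred_mult:
      "expectation (\<lambda>\<omega>. (exp_sample a \<omega> - 1) * (exp_sample b \<omega> - 1)) = exp (4 * sample_corr a b) - 1"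
proof -
  have expand: "(\<lambda>\<omega>. (exp_sample a \<omega> - 1) * (exp_sample b \<omega> - 1))
      = (\<lambda>\<omega>. exp_sample a \<omega> * exp_sample b \<omega> - exp_sample a \<omega> - exp_sample b \<omega> + 1)"
    by (rule ext) (simp add: algebra_simps)
  show "integrable M (\<lambda>\<omega>. (exp_sample a \<omega> - 1) * (exp_sample b \<omega> - 1))"
    unfolding expand using integrable_exp_sample_mult integrable_exp_sample by auto
  show "expectation (\<lambda>\<omega>. (exp_sample a \<omega> - 1) * (exp_sample b \<omega> - 1)) = exp (4 * sample_corr a b) - 1"
    unfolding expand
    using integrable_exp_sample_mult expectation_exp_sample_mult integrable_exp_sample expectation_exp_sample
    by (simp add: prob_space)
qed

lemma expectation_exp_sample_separated_le:
  assumes D: "D \<ge> 3" and "i \<noteq> l"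
  shows "expectation (\<lambda>\<omega>. (exp_sample (K + i * D) \<omega> - 1) * (exp_sample (K + l * D) \<omega> - 1)) \<le> 8 / 2 ^ D"
proof -
  have "(2::real) ^ 3 \<le> 2 ^ D" using D by (intro power_increasing) auto
  then have small: "4 / 2 ^ D \<le> (1/2::real)" by (simp add: divide_simps)
  have "exp (4 * sample_corr (K + i * D) (K + l * D)) \<le> exp (4 / 2 ^ D)"
    using sample_corr_separated_le[of D i l K] assms by simp
  also have "\<dots> \<le> 1 + 8 / 2 ^ D"
    using exp_bound_lemma[of "4 / 2 ^ D :: real"] small by simp
  finally show ?thesis by (simp add: expectation_exp_sample_centred_mult)
qed

lemma
  assumes D: "D \<ge> 3"
  shows integrable_sum_exp_sample_square:
      "integrable M (\<lambda>\<omega>. (\<Sum>i<N. exp_sample (K + i * D) \<omega> - 1)\<^sup>2)"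
    and expectation_sum_exp_sample_square_le:
      "expectation (\<lambda>\<omega>. (\<Sum>i<N. exp_sample (K + i * D) \<omega> - 1)\<^sup>2) \<le> real N * exp 4 + (real N)\<^sup>2 * (8 / 2 ^ D)"
proof -
  define Z where "Z i \<omega> = exp_sample (K + i * D) \<omega> - 1" for i \<omega>
  have square: "(\<lambda>\<omega>. (\<Sum>i<N. exp_sample (K + i * D) \<omega> - 1)\<^sup>2) = (\<lambda>\<omega>. \<Sum>i<N. \<Sum>l<N. Z i \<omega> * Z l \<omega>)"
    by (simp add: Z_def power2_eq_square sum_product)
  have int: "integrable M (\<lambda>\<omega>. Z i \<omega> * Z l \<omega>)" for i l
    unfolding Z_def by (rule integrable_exp_sample_centred_mult)
  have term_le: "expectation (\<lambda>\<omega>. Z i \<omega> * Z l \<omega>) \<le> (if i = l then exp 4 else 0) + 8 / 2 ^ D" for i l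
  proof (cases "i = l")
    case True
    then show ?thesis
      by (simp add: Z_def expectation_exp_sample_centred_mult sample_corr_diag add_increasing2)
  qed (use expectation_exp_sample_separated_le[OF D] in \<open>simp add: Z_def\<close>)
  show "integrable M (\<lambda>\<omega>. (\<Sum>i<N. exp_sample (K + i * D) \<omega> - 1)\<^sup>2)"
    unfolding square using int by auto
  have "expectation (\<lambda>\<omega>. (\<Sum>i<N. exp_sample (K + i * D) \<omega> - 1)\<^sup>2)
      = (\<Sum>i<N. \<Sum>l<N. expectation (\<lambda>\<omega>. Z i \<omega> * Z l \<omega>))"
    unfolding square using int by (simp add: Bochner_Integration.integral_sum Bochner_Integration.integrable_sum)
  also have "\<dots> \<le> (\<Sum>i<N. \<Sum>l<N. (if i = l then exp 4 else 0) + 8 / 2 ^ D)"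
    by (intro sum_mono term_le)
  also have "\<dots> = real N * exp 4 + (real N)\<^sup>2 * (8 / 2 ^ D)"
    by (simp add: sum.distrib power2_eq_square algebra_simps)
  finally show "expectation (\<lambda>\<omega>. (\<Sum>i<N. exp_sample (K + i * D) \<omega> - 1)\<^sup>2) \<le> real N * exp 4 + (real N)\<^sup>2 * (8 / 2 ^ D)" .
qed

lemma exp_minus_one_le_half: "exp (-1::real) \<le> 1/2"
proof -
  have "2 \<le> exp (1::real)" using exp_ge_add_one_self[of 1] by simp
  then show ?thesis by (simp add: exp_minus divide_simps)
qed

text \<open>
  On this event each of the 2^D centred variables exp_sample (K + i * D) - 1 is at most -1/2, so the
  square of their sum is at least 4^D / 4, while its expectation is only O(2^D).
\<close>

lemma prob_sample_small_from_le:
  assumes D: "D \<ge> 3"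
  shows "prob {\<omega> \<in> space M. \<forall>n\<ge>K. g (sample_time n) 0 \<omega> \<le> sample_sd n / 2} \<le> 4 * (exp 4 + 8) / 2 ^ D"
proof -
  define N :: nat where "N = 2 ^ D"
  have N_pos: "real N > 0" by (simp add: N_def)
  define S where "S \<omega> = (\<Sum>i<N. exp_sample (K + i * D) \<omega> - 1)" for \<omega>
  have [measurable]: "S \<in> borel_measurable M" unfolding S_def by measurable
  have "{\<omega> \<in> space M. \<forall>n\<ge>K. g (sample_time n) 0 \<omega> \<le> sample_sd n / 2} \<subseteq> {\<omega> \<in> space M. (real N)\<^sup>2 / 4 \<le> (S \<omega>)\<^sup>2}"
  proof safe
    fix \<omega> assume small: "\<forall>n\<ge>K. g (sample_time n) 0 \<omega> \<le> sample_sd n / 2"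
    have "exp_sample (K + i * D) \<omega> - 1 \<le> - 1/2" for i
    proof -
      have "g (sample_time (K + i * D)) 0 \<omega> / sample_sd (K + i * D) \<le> 1/2"
        using small sample_sd_pos[of "K + i * D"] by (simp add: divide_simps)
      then have "2 * (g (sample_time (K + i * D)) 0 \<omega> / sample_sd (K + i * D)) - 2 \<le> -1" by linarith
      then have "exp_sample (K + i * D) \<omega> \<le> exp (-1)" unfolding exp_sample_def by simp
      then show ?thesis using exp_minus_one_le_half by simp
    qed
    then have "S \<omega> \<le> - real N / 2"
      using sum_mono[of "{..<N}" "\<lambda>i. exp_sample (K + i * D) \<omega> - 1" "\<lambda>_. - 1/2"] by (simp add: S_def)
    then have "(real N / 2)\<^sup>2 \<le> (S \<omega>)\<^sup>2"
      using N_pos by (intro power_mono[of "real N / 2" "- S \<omega>" 2, simplified]) auto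
    then show "(real N)\<^sup>2 / 4 \<le> (S \<omega>)\<^sup>2" by (simp add: power_divide)
  qed
  then have "prob {\<omega> \<in> space M. \<forall>n\<ge>K. g (sample_time n) 0 \<omega> \<le> sample_sd n / 2}
      \<le> prob {\<omega> \<in> space M. (real N)\<^sup>2 / 4 \<le> (S \<omega>)\<^sup>2}"
    by (intro finite_measure_mono) measurable
  also have "\<dots> \<le> expectation (\<lambda>\<omega>. (S \<omega>)\<^sup>2) / ((real N)\<^sup>2 / 4)"
    using N_pos integrable_sum_exp_sample_square[OF D]
    by (intro integral_Markov_inequality_measure[where A="space M"]) (auto simp: S_def)
  also have "\<dots> \<le> (real N * exp 4 + (real N)\<^sup>2 * (8 / 2 ^ D)) / ((real N)\<^sup>2 / 4)"
    using N_pos expectation_sum_exp_sample_square_le[OF D] by (intro divide_right_mono) (auto simp: S_def)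
  also have "\<dots> = 4 * (exp 4 + 8) / 2 ^ D"
    using N_pos by (simp add: N_def field_simps power2_eq_square)
  finally show ?thesis .
qed

lemma prob_sample_small_from_eq_0:
  "prob {\<omega> \<in> space M. \<forall>n\<ge>K. g (sample_time n) 0 \<omega> \<le> sample_sd n / 2} = 0"
proof (rule ccontr)
  define p where "p = prob {\<omega> \<in> space M. \<forall>n\<ge>K. g (sample_time n) 0 \<omega> \<le> sample_sd n / 2}"
  assume "p \<noteq> 0"
  then have p: "p > 0" unfolding p_def using measure_nonneg[of M] by (simp add: order_less_le)
  obtain n where n: "4 * (exp 4 + 8) / p < (2::real) ^ n" using real_arch_pow[of 2] by auto
  have "(2::real) ^ n \<le> 2 ^ max n 3" by (intro power_increasing) auto
  with n have "4 * (exp 4 + 8) / p < 2 ^ max n 3" by (rule less_le_trans)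
  with p have "4 * (exp 4 + 8) / 2 ^ max n 3 < p" by (simp add: divide_simps mult.commute)
  moreover have "p \<le> 4 * (exp 4 + 8) / 2 ^ max n 3" unfolding p_def by (rule prob_sample_small_from_le) simp
  ultimately show False by simp
qed

lemma AE_frequently_sample_large:
  "AE \<omega> in M. \<exists>\<^sub>F n in sequentially. sample_sd n / 2 < g (sample_time n) 0 \<omega>"
proof -
  have "AE \<omega> in M. \<forall>K. \<omega> \<notin> {\<omega> \<in> space M. \<forall>n\<ge>K. g (sample_time n) 0 \<omega> \<le> sample_sd n / 2}"
  proof (subst AE_all_countable, intro allI AE_not_in null_setsI)
    show "emeasure M {\<omega> \<in> space M. \<forall>n\<ge>K. g (sample_time n) 0 \<omega> \<le> sample_sd n / 2} = 0" for K
      using prob_sample_small_from_eq_0[of K] by (simp add: emeasure_eq_measure)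
  qed (use sample_time_nonneg in measurable)
  then show ?thesis
    using AE_space by eventually_elim (auto simp: frequently_sequentially not_le)
qed

end

section \<open>Chaining on the unit square\<close>

text \<open>
  A step of level L has variance at most 16 scale n / 4^L, and the thresholds (3/4)^L decay more
  slowly than its standard deviation: the Gaussian tail exp (-(n + 16) (9/4)^L) beats the 256^L
  pairs of grid points of that level, while the thresholds still sum to at most 3 chain_const n.
\<close>

definition chain_const :: "nat \<Rightarrow> real" where "chain_const n = sqrt (32 * scale n * (real n + 16))"
definition level_threshold :: "nat \<Rightarrow> nat \<Rightarrow> real" where "level_threshold n L = chain_const n * (3/4) ^ L"
definition grid_time :: "nat \<Rightarrow> nat \<Rightarrow> nat \<Rightarrow> real" where "grid_time n L i = sample_time n + real i / 16 ^ L"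
definition grid_space :: "nat \<Rightarrow> nat \<Rightarrow> real" where "grid_space L j = real j / 16 ^ L"

lemma grid_time_nonneg: "grid_time n L i \<ge> 0"
  using sample_time_nonneg[of n] by (simp add: grid_time_def)

lemma grid_parent_le: "real (i div 16) / 16 ^ k \<le> real i / 16 ^ Suc k"
proof -
  have "16 * real (i div 16) \<le> real i" using of_nat_mono[of "16 * (i div 16)" i] by simp
  then show ?thesis by (simp add: divide_simps)
qed

lemma grid_parent_diff_le: "real i / 16 ^ Suc k - real (i div 16) / 16 ^ k \<le> 1 / 16 ^ k"
proof -
  have "i < 16 * (i div 16) + 16" by simp
  then have "real i \<le> 16 * real (i div 16) + 16" by linarith
  then show ?thesis by (simp add: divide_simps)
qed

lemma sqrt_inverse_16_power: "sqrt (1 / 16 ^ k) = 4 / 4 ^ Suc k"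
proof -
  have "(4::real) ^ k * 4 ^ k = (4 * 4) ^ k" by (rule power_mult_distrib[symmetric])
  then have "(16::real) ^ k = (4 ^ k)\<^sup>2" by (simp add: power2_eq_square)
  then show ?thesis by (simp add: real_sqrt_divide)
qed

lemma grid_time_le: "i < 16 ^ L \<Longrightarrow> grid_time n L i \<le> sample_time n + 1"
proof -
  assume "i < 16 ^ L"
  then have "real i < 16 ^ L" by (metis of_nat_less_iff of_nat_numeral of_nat_power)
  then have "real i / 16 ^ L < 1" by simp
  then show ?thesis unfolding grid_time_def by linarith
qed

lemma powr_quarter_le_scale: "0 \<le> t \<Longrightarrow> t \<le> sample_time n + 1 \<Longrightarrow> t powr (1/4) \<le> 2 * scale n"
proof -
  assume t: "0 \<le> t" "t \<le> sample_time n + 1"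
  have "1 \<le> scale n ^ 4" using scale_ge_2[of n] by (intro one_le_power) simp
  then have "t \<le> (2 * scale n) ^ 4" using t by (simp add: sample_time_def power_mult_distrib)
  then have "t powr (1/4) \<le> ((2 * scale n) ^ 4) powr (1/4)" using t by (intro powr_mono2) auto
  also have "((2 * scale n) ^ 4) powr (1/4) = 2 * scale n"
  proof -
    have "(2 * scale n) ^ 4 = (2 * scale n) powr 4" using scale_pos[of n] by (subst powr_numeral) auto
    then have "((2 * scale n) ^ 4) powr (1/4) = (2 * scale n) powr (4 * (1/4))" by (simp only: powr_powr)
    then show ?thesis using scale_pos[of n] by simp
  qed
  finally show ?thesis .
qed

text \<open>
  The point (i, j) of the grid of level k + 1 is joined to its parent (i div 16, j div 16) of
  level k by a step in time followed by a step in space.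
\<close>

lemma grid_time_step_variance_le:
  "(\<integral>z. (heat_integrand (grid_time n (Suc k) i) x z - heat_integrand (grid_time n k (i div 16)) x z)\<^sup>2 \<partial>lborel)
     \<le> 16 * scale n / 4 ^ Suc k"
proof -
  have le: "grid_time n k (i div 16) \<le> grid_time n (Suc k) i" using grid_parent_le[of i k] by (simp add: grid_time_def)
  have "(\<integral>z. (heat_integrand (grid_time n (Suc k) i) x z - heat_integrand (grid_time n k (i div 16)) x z)\<^sup>2 \<partial>lborel)
      \<le> sqrt (grid_time n (Suc k) i - grid_time n k (i div 16))"
    by (rule heat_integrand_time_increment_le[OF grid_time_nonneg le])
  also have "\<dots> \<le> sqrt (1 / 16 ^ k)" using grid_parent_diff_le[of i k] by (simp add: grid_time_def)
  also have "\<dots> \<le> 16 * scale n / 4 ^ Suc k"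
    unfolding sqrt_inverse_16_power using scale_ge_2[of n] by (intro divide_right_mono) auto
  finally show ?thesis .
qed

lemma grid_space_step_variance_le:
  assumes i: "i < 16 ^ Suc k"
  shows "(\<integral>z. (heat_integrand (grid_time n k (i div 16)) (grid_space (Suc k) j) z
      - heat_integrand (grid_time n k (i div 16)) (grid_space k (j div 16)) z)\<^sup>2 \<partial>lborel) \<le> 16 * scale n / 4 ^ Suc k"
proof -
  have i': "i div 16 < 16 ^ k" using i by (simp add: less_mult_imp_div_less mult.commute)
  have "\<bar>grid_space (Suc k) j - grid_space k (j div 16)\<bar> \<le> 1 / 16 ^ k"
    using grid_parent_le[of j k] grid_parent_diff_le[of j k] by (simp add: grid_space_def)
  then have step: "sqrt \<bar>grid_space (Suc k) j - grid_space k (j div 16)\<bar> \<le> 4 / 4 ^ Suc k"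
    unfolding sqrt_inverse_16_power[symmetric] by (rule real_sqrt_le_mono)
  have "(\<integral>z. (heat_integrand (grid_time n k (i div 16)) (grid_space (Suc k) j) z
      - heat_integrand (grid_time n k (i div 16)) (grid_space k (j div 16)) z)\<^sup>2 \<partial>lborel)
      \<le> 2 * sqrt \<bar>grid_space (Suc k) j - grid_space k (j div 16)\<bar> * (grid_time n k (i div 16)) powr (1/4)"
    by (rule heat_integrand_space_increment_le[OF grid_time_nonneg])
  also have "\<dots> \<le> 2 * (4 / 4 ^ Suc k) * (2 * scale n)"
    using step powr_quarter_le_scale[OF grid_time_nonneg grid_time_le[OF i']]
    by (intro mult_mono mult_left_mono) auto
  finally show ?thesis by simp
qed

lemma level_threshold_exponent:
  "(level_threshold n L)\<^sup>2 / (2 * (16 * scale n / 4 ^ L)) \<ge> (real n + 16) * real L"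
proof -
  have Q: "scale n > 0" by (rule scale_pos)
  have "((3/4::real) ^ L)\<^sup>2 = (9/16) ^ L" by (simp add: power2_eq_square power_mult_distrib[symmetric])
  then have "(level_threshold n L)\<^sup>2 = 32 * scale n * (real n + 16) * (9/16) ^ L"
    using Q by (simp add: level_threshold_def chain_const_def power_mult_distrib)
  then have "(level_threshold n L)\<^sup>2 / (2 * (16 * scale n / 4 ^ L)) = (real n + 16) * ((9/16) ^ L * 4 ^ L)"
    using Q by (simp add: field_simps)
  also have "(9/16::real) ^ L * 4 ^ L = (9/4) ^ L" by (simp flip: power_mult_distrib)
  finally have e: "(level_threshold n L)\<^sup>2 / (2 * (16 * scale n / 4 ^ L)) = (real n + 16) * (9/4) ^ L" .
  have "real L \<le> (9/4::real) ^ L"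
  proof (induction L)
    case (Suc L)
    have "(1::real) \<le> (9/4) ^ L" by (simp add: one_le_power)
    moreover have "(9/4::real) ^ Suc L = 9/4 * (9/4) ^ L" by simp
    ultimately show ?case using Suc.IH unfolding of_nat_Suc by linarith
  qed simp
  then show ?thesis unfolding e by (intro mult_left_mono) auto
qed

lemma sum_level_threshold_le: "(\<Sum>k<K. 2 * level_threshold n (Suc k)) \<le> 6 * chain_const n"
proof -
  have "(\<Sum>k<K. (3/4::real) ^ Suc k) = (3/4) * (\<Sum>k<K. (3/4::real) ^ k)"
    by (simp add: sum_distrib_left)
  also have "(\<Sum>k<K. (3/4::real) ^ k) = (1 - (3/4) ^ K) / (1 - 3/4)" by (simp add: sum_gp_strict)
  also have "(3/4::real) * ((1 - (3/4) ^ K) / (1 - 3/4)) \<le> 3"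
    using zero_le_power[of "3/4::real" K] by simp
  finally have "(\<Sum>k<K. (3/4::real) ^ Suc k) \<le> 3" .
  then have "2 * chain_const n * (\<Sum>k<K. (3/4::real) ^ Suc k) \<le> 2 * chain_const n * 3"
    using scale_pos[of n] by (intro mult_left_mono) (auto simp: chain_const_def)
  moreover have "(\<Sum>k<K. 2 * level_threshold n (Suc k)) = 2 * chain_const n * (\<Sum>k<K. (3/4::real) ^ Suc k)"
    by (simp add: level_threshold_def sum_distrib_left mult.assoc)
  ultimately show ?thesis by simp
qed

definition bad_ratio :: "nat \<Rightarrow> real" where "bad_ratio n = 256 * exp (- (real n + 16))"

lemma bad_ratio_pos: "bad_ratio n > 0" by (simp add: bad_ratio_def)

lemma bad_ratio_le_half: "bad_ratio n \<le> 1/2"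
proof -
  have "(2::real) ^ 16 \<le> (exp 1) ^ 16"
    using exp_ge_add_one_self[of 1] by (intro power_mono) auto
  also have "(exp 1) ^ 16 = exp (16::real)" by (simp flip: exp_of_nat_mult)
  also have "\<dots> \<le> exp (real n + 16)" by simp
  finally have "512 \<le> exp (real n + 16)" by simp
  have "bad_ratio n = 256 / exp (real n + 16)"
    unfolding bad_ratio_def exp_minus[of "real n + 16"] by (simp add: divide_inverse)
  also have "\<dots> \<le> 256 / 512" using \<open>512 \<le> exp (real n + 16)\<close> by (intro divide_left_mono) auto
  finally show ?thesis by simp
qed

lemma bad_ratio_power: "256 ^ L * exp (- ((real n + 16) * real L)) = bad_ratio n ^ L"
proof -
  have "- ((real n + 16) * real L) = real L * (- (real n + 16))" by (simp add: algebra_simps)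
  then have "exp (- ((real n + 16) * real L)) = exp (- (real n + 16)) ^ L"
    by (simp only: exp_of_nat_mult)
  then show ?thesis by (simp add: bad_ratio_def power_mult_distrib)
qed

context heat_white_noise
begin

definition time_step_bad :: "nat \<Rightarrow> nat \<Rightarrow> nat \<Rightarrow> nat \<Rightarrow> 'a set" where
  "time_step_bad n k i j = {\<omega> \<in> space M. level_threshold n (Suc k)
     \<le> \<bar>g (grid_time n (Suc k) i) (grid_space (Suc k) j) \<omega> - g (grid_time n k (i div 16)) (grid_space (Suc k) j) \<omega>\<bar>}"
definition space_step_bad :: "nat \<Rightarrow> nat \<Rightarrow> nat \<Rightarrow> nat \<Rightarrow> 'a set" where
  "space_step_bad n k i j = {\<omega> \<in> space M. level_threshold n (Suc k)
     \<le> \<bar>g (grid_time n k (i div 16)) (grid_space (Suc k) j) \<omega> - g (grid_time n k (i div 16)) (grid_space k (j div 16)) \<omega>\<bar>}"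
definition level_bad :: "nat \<Rightarrow> nat \<Rightarrow> 'a set" where
  "level_bad n k = (\<Union>i<16 ^ Suc k. \<Union>j<16 ^ Suc k. time_step_bad n k i j \<union> space_step_bad n k i j)"
definition grid_bad :: "nat \<Rightarrow> 'a set" where
  "grid_bad n = (\<Union>k. level_bad n k)"

lemma measurable_g_grid[measurable]: "g (grid_time n L i) x \<in> borel_measurable M"
  by (rule measurable_g[OF grid_time_nonneg])

lemma time_step_bad_sets[measurable]: "time_step_bad n k i j \<in> sets M"
  unfolding time_step_bad_def by measurable
lemma space_step_bad_sets[measurable]: "space_step_bad n k i j \<in> sets M"
  unfolding space_step_bad_def by measurable
lemma level_bad_sets[measurable]: "level_bad n k \<in> sets M"
  unfolding level_bad_def by measurable
lemma grid_bad_sets[measurable]: "grid_bad n \<in> sets M"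
  unfolding grid_bad_def by measurable

lemma exp_level_threshold_le:
  "2 * exp (- (level_threshold n (Suc k))\<^sup>2 / (2 * (16 * scale n / 4 ^ Suc k)))
     \<le> 2 * exp (- ((real n + 16) * real (Suc k)))"
  using level_threshold_exponent[of n "Suc k"] by simp

lemma prob_time_step_bad: "prob (time_step_bad n k i j) \<le> 2 * exp (- ((real n + 16) * real (Suc k)))"
proof -
  have "prob (time_step_bad n k i j) \<le> 2 * exp (- (level_threshold n (Suc k))\<^sup>2 / (2 * (16 * scale n / 4 ^ Suc k)))"
    unfolding time_step_bad_def using scale_pos[of n]
    by (intro prob_abs_g_diff_ge[OF grid_time_nonneg grid_time_nonneg grid_time_step_variance_le])
      (auto simp: level_threshold_def chain_const_def)
  then show ?thesis using exp_level_threshold_le by (rule order.trans)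
qed

lemma prob_space_step_bad:
  "i < 16 ^ Suc k \<Longrightarrow> prob (space_step_bad n k i j) \<le> 2 * exp (- ((real n + 16) * real (Suc k)))"
proof -
  assume i: "i < 16 ^ Suc k"
  have "prob (space_step_bad n k i j) \<le> 2 * exp (- (level_threshold n (Suc k))\<^sup>2 / (2 * (16 * scale n / 4 ^ Suc k)))"
    unfolding space_step_bad_def using scale_pos[of n]
    by (intro prob_abs_g_diff_ge[OF grid_time_nonneg grid_time_nonneg grid_space_step_variance_le[OF i]])
      (auto simp: level_threshold_def chain_const_def)
  then show ?thesis using exp_level_threshold_le by (rule order.trans)
qed

lemma prob_level_bad: "prob (level_bad n k) \<le> 4 * bad_ratio n ^ Suc k"
proof -
  define E where "E = 2 * exp (- ((real n + 16) * real (Suc k)))"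
  have "prob (level_bad n k) \<le> (\<Sum>i<16 ^ Suc k. prob (\<Union>j<16 ^ Suc k. time_step_bad n k i j \<union> space_step_bad n k i j))"
    unfolding level_bad_def by (rule measure_UNION_le) auto
  also have "\<dots> \<le> (\<Sum>i<16 ^ Suc k. \<Sum>j<16 ^ Suc k. prob (time_step_bad n k i j \<union> space_step_bad n k i j))"
    by (intro sum_mono measure_UNION_le) auto
  also have "\<dots> \<le> (\<Sum>i<(16::nat) ^ Suc k. \<Sum>j<(16::nat) ^ Suc k. E + E)"
  proof (intro sum_mono)
    fix i j :: nat assume i: "i \<in> {..<16 ^ Suc k}"
    have "prob (time_step_bad n k i j \<union> space_step_bad n k i j) \<le> prob (time_step_bad n k i j) + prob (space_step_bad n k i j)"
      by (rule measure_Un_le) auto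
    also have "\<dots> \<le> E + E" unfolding E_def using prob_time_step_bad prob_space_step_bad i by (intro add_mono) auto
    finally show "prob (time_step_bad n k i j \<union> space_step_bad n k i j) \<le> E + E" .
  qed
  also have "\<dots> = 4 * (256 ^ Suc k * exp (- ((real n + 16) * real (Suc k))))"
    unfolding E_def by (simp add: power_mult_distrib[symmetric])
  also have "\<dots> = 4 * bad_ratio n ^ Suc k" by (simp only: bad_ratio_power)
  finally show ?thesis .
qed

lemma prob_grid_bad: "prob (grid_bad n) \<le> 8 * bad_ratio n"
proof -
  have q: "0 \<le> bad_ratio n" "bad_ratio n < 1" using bad_ratio_pos[of n] bad_ratio_le_half[of n] by auto
  have summable_bound: "summable (\<lambda>k. 4 * bad_ratio n ^ Suc k)"
    using q by (intro summable_mult) (simp add: summable_geometric_iff)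
  have summable_prob: "summable (\<lambda>k. prob (level_bad n k))"
    by (rule summable_comparison_test'[OF summable_bound, of 0]) (use prob_level_bad in auto)
  have "emeasure M (grid_bad n) \<le> (\<Sum>k. prob (level_bad n k))"
    unfolding grid_bad_def by (rule emeasure_union_summable(2)[OF _ _ summable_prob]) (auto simp: emeasure_eq_measure)
  then have "prob (grid_bad n) \<le> (\<Sum>k. prob (level_bad n k))"
    by (simp add: emeasure_eq_measure suminf_nonneg[OF summable_prob] ennreal_le_iff)
  also have "\<dots> \<le> (\<Sum>k. 4 * bad_ratio n ^ Suc k)"
    by (rule suminf_le[OF _ summable_prob summable_bound]) (rule prob_level_bad)
  also have "(\<Sum>k. 4 * bad_ratio n ^ Suc k) = 4 * bad_ratio n * (\<Sum>k. bad_ratio n ^ k)"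
    using q by (subst suminf_mult[symmetric]) (auto simp: algebra_simps)
  also have "\<dots> = 4 * bad_ratio n / (1 - bad_ratio n)" using q by (simp add: suminf_geometric)
  also have "\<dots> \<le> 8 * bad_ratio n"
    using bad_ratio_le_half[of n] bad_ratio_pos[of n] by (simp add: divide_simps)
  finally show ?thesis .
qed

lemma AE_eventually_not_grid_bad: "AE \<omega> in M. eventually (\<lambda>n. \<omega> \<notin> grid_bad n) sequentially"
proof -
  have "summable (\<lambda>n. 2048 * exp (- 16) * exp (-1) ^ n :: real)"
    by (intro summable_mult summable_geometric) simp
  then have "summable (\<lambda>n. prob (grid_bad n))"
  proof (rule summable_comparison_test'[of _ 0])
    fix n :: nat
    have "exp (- (real n + 16)) = exp (- 16) * exp (real n * (-1))" by (simp add: exp_add[symmetric])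
    then have "8 * bad_ratio n = 2048 * exp (- 16) * exp (-1) ^ n"
      unfolding bad_ratio_def exp_of_nat_mult by simp
    then show "norm (prob (grid_bad n)) \<le> 2048 * exp (- 16) * exp (-1) ^ n"
      using prob_grid_bad[of n] by (simp add: mult_ac)
  qed
  then have "AE \<omega> in M. eventually (\<lambda>n. \<omega> \<in> space M - grid_bad n) sequentially"
    by (intro borel_cantelli_AE1) (auto simp: emeasure_eq_measure)
  then show ?thesis by (rule AE_mp) (auto intro!: AE_I2 elim: eventually_mono)
qed

lemma grid_oscillation_le:
  assumes "\<omega> \<in> space M" and "\<omega> \<notin> grid_bad n"
  shows "i < 16 ^ K \<Longrightarrow> j < 16 ^ K \<Longrightarrow>
     \<bar>g (grid_time n K i) (grid_space K j) \<omega> - g (sample_time n) 0 \<omega>\<bar> \<le> (\<Sum>k<K. 2 * level_threshold n (Suc k))"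
proof (induction K arbitrary: i j)
  case 0
  then show ?case by (simp add: grid_time_def grid_space_def)
next
  case (Suc K)
  have "\<omega> \<notin> time_step_bad n K i j" "\<omega> \<notin> space_step_bad n K i j"
    using assms(2) Suc.prems by (auto simp: grid_bad_def level_bad_def)
  with assms(1) have time_step: "\<bar>g (grid_time n (Suc K) i) (grid_space (Suc K) j) \<omega> - g (grid_time n K (i div 16)) (grid_space (Suc K) j) \<omega>\<bar>
        \<le> level_threshold n (Suc K)"
    and space_step: "\<bar>g (grid_time n K (i div 16)) (grid_space (Suc K) j) \<omega> - g (grid_time n K (i div 16)) (grid_space K (j div 16)) \<omega>\<bar>
        \<le> level_threshold n (Suc K)"
    by (auto simp: time_step_bad_def space_step_bad_def)
  have "i div 16 < 16 ^ K" "j div 16 < 16 ^ K"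
    using Suc.prems by (simp_all add: less_mult_imp_div_less mult.commute)
  then have "\<bar>g (grid_time n K (i div 16)) (grid_space K (j div 16)) \<omega> - g (sample_time n) 0 \<omega>\<bar>
      \<le> (\<Sum>k<K. 2 * level_threshold n (Suc k))"
    by (rule Suc.IH)
  then have "\<bar>g (grid_time n (Suc K) i) (grid_space (Suc K) j) \<omega> - g (sample_time n) 0 \<omega>\<bar>
     \<le> level_threshold n (Suc K) + level_threshold n (Suc K) + (\<Sum>k<K. 2 * level_threshold n (Suc k))"
    using time_step space_step by linarith
  then show ?case by simp
qed

end

definition grid_index :: "nat \<Rightarrow> real \<Rightarrow> nat" where
  "grid_index K y = min (nat \<lfloor>y * 16 ^ K\<rfloor>) (16 ^ K - 1)"

lemma grid_index_less: "grid_index K y < 16 ^ K"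
proof -
  have "(1::nat) \<le> 16 ^ K" by simp
  then show ?thesis unfolding grid_index_def by linarith
qed

lemma grid_index_bounds:
  assumes y: "0 \<le> y" "y \<le> 1"
  shows "y - 1 / 16 ^ K \<le> real (grid_index K y) / 16 ^ K" and "real (grid_index K y) / 16 ^ K \<le> y"
proof -
  define F where "F = \<lfloor>y * 16 ^ K\<rfloor>"
  have F0: "F \<ge> 0" using y by (simp add: F_def)
  have F1: "real_of_int F \<le> y * 16 ^ K" "y * 16 ^ K < real_of_int F + 1"
    unfolding F_def by linarith+
  have rn: "real (nat F) = real_of_int F" using F0 by simp
  have "(1::nat) \<le> 16 ^ K" by simp
  then have r16: "real (16 ^ K - 1 :: nat) = 16 ^ K - 1" by (simp add: of_nat_diff)
  have pos: "(0::real) < 16 ^ K" by simp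
  have "y - 1 / 16 ^ K \<le> real (grid_index K y) / 16 ^ K \<and> real (grid_index K y) / 16 ^ K \<le> y"
  proof (cases "nat F \<le> 16 ^ K - 1")
    case True
    then have "grid_index K y = nat F" by (simp add: grid_index_def F_def)
    then show ?thesis using F1 rn pos by (simp add: divide_simps)
  next
    case False
    then have "grid_index K y = 16 ^ K - 1" by (simp add: grid_index_def F_def)
    moreover have "real (16 ^ K - 1 :: nat) < real (nat F)" using False by linarith
    then have "16 ^ K - 1 < real_of_int F" using r16 rn by simp
    ultimately show ?thesis unfolding r16 using F1 pos y by (simp add: r16 divide_simps)
  qed
  then show "y - 1 / 16 ^ K \<le> real (grid_index K y) / 16 ^ K" and "real (grid_index K y) / 16 ^ K \<le> y"
    by auto
qed

lemma grid_index_tendsto: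
  assumes "0 \<le> y" "y \<le> 1"
  shows "(\<lambda>K. real (grid_index K y) / 16 ^ K) \<longlonglongrightarrow> y"
proof (rule tendsto_sandwich[of "\<lambda>K. y - 1 / 16 ^ K" _ _ "\<lambda>K. y"])
  show "(\<lambda>K. y - 1 / 16 ^ K) \<longlonglongrightarrow> y"
    by real_asymp
qed (use grid_index_bounds[OF assms] in auto)

lemma continuous_grid_bound:
  fixes G :: "real \<times> real \<Rightarrow> real"
  assumes cont: "continuous_on ({0..} \<times> UNIV) G" and T: "T \<ge> 0"
    and bound: "\<And>K i j. i < 16 ^ K \<Longrightarrow> j < 16 ^ K \<Longrightarrow> \<bar>G (T + real i / 16 ^ K, real j / 16 ^ K) - G (T, 0)\<bar> \<le> C"
    and h: "0 \<le> h" "h \<le> 1" and x: "0 \<le> x" "x \<le> 1"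
  shows "\<bar>G (T + h, x) - G (T, 0)\<bar> \<le> C"
proof -
  define p where "p K = (T + real (grid_index K h) / 16 ^ K, real (grid_index K x) / 16 ^ K)" for K
  have "p \<longlonglongrightarrow> (T + h, x)"
    unfolding p_def by (intro tendsto_Pair tendsto_add tendsto_const grid_index_tendsto h x)
  then have "(\<lambda>K. G (p K)) \<longlonglongrightarrow> G (T + h, x)"
    by (rule continuous_on_tendsto_compose[OF cont]) (use T h in \<open>auto simp: p_def\<close>)
  then have "(\<lambda>K. \<bar>G (p K) - G (T, 0)\<bar>) \<longlonglongrightarrow> \<bar>G (T + h, x) - G (T, 0)\<bar>"
    by (intro tendsto_rabs tendsto_diff tendsto_const)
  moreover have "\<forall>\<^sub>F K in sequentially. \<bar>G (p K) - G (T, 0)\<bar> \<le> C"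
    unfolding p_def using bound[OF grid_index_less grid_index_less] by simp
  ultimately show ?thesis by (rule tendsto_upperbound) simp
qed

context heat_white_noise
begin

lemma INF_unit_square_ge:
  assumes "\<omega> \<in> space M" and "\<omega> \<notin> grid_bad n"
    and cont: "continuous_on ({0..} \<times> UNIV) (\<lambda>(t, x). g t x \<omega>)"
  shows "g (sample_time n) 0 \<omega> - 6 * chain_const n \<le> (INF p \<in> {0..1} \<times> {0..1}. g (sample_time n + fst p) (snd p) \<omega>)"
proof (rule cINF_greatest)
  fix p :: "real \<times> real"
  assume "p \<in> {0..1} \<times> {0..1}"
  then obtain h x where p: "p = (h, x)" "0 \<le> h" "h \<le> 1" "0 \<le> x" "x \<le> 1" by auto
  have "\<bar>(\<lambda>(t, x). g t x \<omega>) (sample_time n + h, x) - (\<lambda>(t, x). g t x \<omega>) (sample_time n, 0)\<bar> \<le> 6 * chain_const n"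
  proof (rule continuous_grid_bound[OF cont sample_time_nonneg _ p(2-5)])
    fix K i j :: nat
    assume "i < 16 ^ K" "j < 16 ^ K"
    then have "\<bar>g (grid_time n K i) (grid_space K j) \<omega> - g (sample_time n) 0 \<omega>\<bar> \<le> 6 * chain_const n"
      by (rule order.trans[OF grid_oscillation_le[OF assms(1,2)] sum_level_threshold_le])
    then show "\<bar>(\<lambda>(t, x). g t x \<omega>) (sample_time n + real i / 16 ^ K, real j / 16 ^ K)
        - (\<lambda>(t, x). g t x \<omega>) (sample_time n, 0)\<bar> \<le> 6 * chain_const n"
      by (simp add: grid_time_def grid_space_def)
  qed
  then show "g (sample_time n) 0 \<omega> - 6 * chain_const n \<le> g (sample_time n + fst p) (snd p) \<omega>"
    using p(1) by simp
qed auto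

end

lemma scale_eq_powr: "scale n = 2 powr (real n + 1)"
  by (simp add: scale_def powr_add powr_realpow)

lemma filterlim_sample_time: "filterlim sample_time at_top sequentially"
  unfolding sample_time_def scale_eq_powr by real_asymp

lemma filterlim_sample_lower_bound:
  "filterlim (\<lambda>n. sample_sd n / 2 - 6 * chain_const n) at_top sequentially"
  unfolding sample_sd_eq chain_const_def scale_eq_powr by real_asymp

lemma frequently_le_imp_subseq_at_top:
  fixes f u t :: "nat \<Rightarrow> real"
  assumes "\<exists>\<^sub>F n in sequentially. f n \<le> u n"
    and "filterlim f at_top sequentially" and "filterlim t at_top sequentially"
  shows "\<exists>r. filterlim (t \<circ> r) at_top sequentially \<and> filterlim (u \<circ> r) at_top sequentially"
proof -
  have infinite: "infinite {n. f n \<le> u n}"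
    using assms(1) frequently_cofinite[of "\<lambda>n. f n \<le> u n"] by (simp add: cofinite_eq_sequentially)
  obtain r :: "nat \<Rightarrow> nat" where r: "strict_mono r" "\<And>k. f (r k) \<le> u (r k)"
    using infinite_enumerate[OF infinite] by auto
  have f_r: "filterlim (f \<circ> r) at_top sequentially" and t_r: "filterlim (t \<circ> r) at_top sequentially"
    using filterlim_compose[OF assms(2) filterlim_subseq[OF r(1)]]
      filterlim_compose[OF assms(3) filterlim_subseq[OF r(1)]]
    by (simp_all add: comp_def)
  have "filterlim (u \<circ> r) at_top sequentially"
    using f_r by (rule filterlim_at_top_mono) (use r(2) in simp)
  with t_r show ?thesis by blast
qed

theorem proposition2p4:
  fixes M :: "'a measure"
    and W :: "(real \<times> real \<Rightarrow> real) \<Rightarrow> 'a \<Rightarrow> real"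
    and g :: "real \<Rightarrow> real \<Rightarrow> 'a \<Rightarrow> real"
  assumes "white_noise_integral M W"
    and "\<And>t x. t \<ge> 0 \<Longrightarrow> g t x \<in> borel_measurable M"
    and "\<And>t x. t \<ge> 0 \<Longrightarrow> AE \<omega> in M. g t x \<omega> = W (heat_integrand t x) \<omega>"
    and "AE \<omega> in M. continuous_on ({0..} \<times> UNIV) (\<lambda>(t, x). g t x \<omega>)"
  shows "AE \<omega> in M. \<exists>tn :: nat \<Rightarrow> real. filterlim tn at_top sequentially \<and>
           filterlim (\<lambda>n. INF p \<in> {0..1} \<times> {0..1}. g (tn n + fst p) (snd p) \<omega>)
             at_top sequentially"
proof -
  interpret heat_white_noise M W g
    using assms(1-3) by unfold_locales
  show ?thesis
    using AE_frequently_sample_large AE_eventually_not_grid_bad assms(4) AE_space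
  proof eventually_elim
    case (elim \<omega>)
    have "\<exists>\<^sub>F n in sequentially. sample_sd n / 2 - 6 * chain_const n
        \<le> (INF p \<in> {0..1} \<times> {0..1}. g (sample_time n + fst p) (snd p) \<omega>)"
      using elim(1)
    proof (rule frequently_rev_mp)
      show "\<forall>\<^sub>F n in sequentially. sample_sd n / 2 < g (sample_time n) 0 \<omega> \<longrightarrow> sample_sd n / 2 - 6 * chain_const n
          \<le> (INF p \<in> {0..1} \<times> {0..1}. g (sample_time n + fst p) (snd p) \<omega>)"
        using elim(2) by (rule eventually_mono) (use INF_unit_square_ge[OF elim(4) _ elim(3)] in force)
    qed
    from frequently_le_imp_subseq_at_top[OF this filterlim_sample_lower_bound filterlim_sample_time]
    show ?case by (auto simp: comp_def)
  qed
qed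

end
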